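(* Over all \textsc{Snort} positions (finite simple graphs $G$), the difference $t(G)-\deg(G)$ is unbounded; that is, for every real $M$ there is a finite simple graph $G$ such that \textsc{Snort} played on $G$ satisfies $t(G)-\deg(G)>M$.
   Context: \textsc{Snort} is a two-player normal-play combinatorial game (the player unable to move loses) between Left (blue) and Right (red), played on a finite simple graph; players alternately colour an uncoloured vertex in their own colour, and a player may not colour a vertex adjacent to a vertex coloured by the opponent. $t(G)$ denotes the temperature (in the standard sense of combinatorial game theory, via thermographs) of the game \textsc{Snort} played on the uncoloured graph $G$, and $\deg(G)$ denotes the maximum degree of a vertex of $G$. *)

theory Defs
  imports Complex_Main
begin

datatype pgame = Game "pgame list" "pgame list"

lemma size_opt_L [termination_simp]: "g \<in> set GL \<Longrightarrow> size g < size (Game GL GR)"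
  by (induct GL) auto
lemma size_opt_R [termination_simp]: "g \<in> set GR \<Longrightarrow> size g < size (Game GL GR)"
  by (induct GR) auto

function game_ge :: "pgame \<Rightarrow> pgame \<Rightarrow> bool" where
  "game_ge (Game GL GR) (Game HL HR) \<longleftrightarrow>
     (\<forall>gr\<in>set GR. \<not> game_ge (Game HL HR) gr) \<and> (\<forall>hl\<in>set HL. \<not> game_ge hl (Game GL GR))"
  by pat_completeness auto
termination
  by (relation "measure (\<lambda>(g, h). size g + size h)") (auto dest: size_opt_L size_opt_R)

definition game_eq :: "pgame \<Rightarrow> pgame \<Rightarrow> bool" where
  "game_eq G H \<longleftrightarrow> game_ge G H \<and> game_ge H G"

fun pos_int_game :: "nat \<Rightarrow> pgame" where
  "pos_int_game 0 = Game [] []"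
| "pos_int_game (Suc n) = Game [pos_int_game n] []"

fun neg_int_game :: "nat \<Rightarrow> pgame" where
  "neg_int_game 0 = Game [] []"
| "neg_int_game (Suc n) = Game [] [neg_int_game n]"

definition int_game :: "int \<Rightarrow> pgame" where
  "int_game m = (if m \<ge> 0 then pos_int_game (nat m) else neg_int_game (nat (- m)))"

text \<open>num_game k m is the canonical form of the dyadic rational m / 2^k.\<close>
fun num_game :: "nat \<Rightarrow> int \<Rightarrow> pgame" where
  "num_game 0 m = int_game m"
| "num_game (Suc k) m =
     (if even m then num_game k (m div 2)
      else Game [num_game k ((m - 1) div 2)] [num_game k ((m + 1) div 2)])"

definition is_number :: "pgame \<Rightarrow> bool" where
  "is_number G \<longleftrightarrow> (\<exists>k m. game_eq G (num_game k m))"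

definition number_value :: "pgame \<Rightarrow> real" where
  "number_value G = (THE x. \<exists>k m. x = real_of_int m / 2 ^ k \<and> game_eq G (num_game k m))"

type_synonym walls = "(real \<Rightarrow> real) \<times> (real \<Rightarrow> real)"  \<comment> \<open>(left wall, right wall)\<close>

definition scaffold_L :: "walls list \<Rightarrow> real \<Rightarrow> real" where
  "scaffold_L ws t = Max ((\<lambda>w. snd w t - t) ` set ws)"

definition scaffold_R :: "walls list \<Rightarrow> real \<Rightarrow> real" where
  "scaffold_R ws t = Min ((\<lambda>w. fst w t + t) ` set ws)"

definition crit_temp :: "walls list \<Rightarrow> walls list \<Rightarrow> real" where
  "crit_temp wl wr = Inf {t. -1 \<le> t \<and> scaffold_L wl t \<le> scaffold_R wr t}"

function thermo_walls :: "pgame \<Rightarrow> walls" where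
  "thermo_walls (Game GL GR) =
     (if is_number (Game GL GR)
      then (\<lambda>_. number_value (Game GL GR), \<lambda>_. number_value (Game GL GR))
      else (let wl = map thermo_walls GL; wr = map thermo_walls GR;
                ts = crit_temp wl wr; x = scaffold_L wl ts
            in (\<lambda>t. if t \<le> ts then scaffold_L wl t else x,
                \<lambda>t. if t \<le> ts then scaffold_R wr t else x)))"
  by pat_completeness auto
termination
  by (relation "measure size") (auto dest: size_opt_L size_opt_R)

fun temperature :: "pgame \<Rightarrow> real" where
  "temperature (Game GL GR) =
     (if is_number (Game GL GR)
      then - 1 / 2 ^ (LEAST k. \<exists>m. game_eq (Game GL GR) (num_game k m))
      else crit_temp (map thermo_walls GL) (map thermo_walls GR))"

definition simple_graph :: "nat set \<Rightarrow> (nat \<Rightarrow> nat \<Rightarrow> bool) \<Rightarrow> bool" where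
  "simple_graph V E \<longleftrightarrow> finite V \<and> (\<forall>u v. E u v \<longrightarrow> u \<in> V \<and> v \<in> V)
     \<and> (\<forall>u v. E u v \<longrightarrow> E v u) \<and> (\<forall>v. \<not> E v v)"

definition max_degree :: "nat set \<Rightarrow> (nat \<Rightarrow> nat \<Rightarrow> bool) \<Rightarrow> nat" where
  "max_degree V E = (if V = {} then 0 else Max ((\<lambda>v. card {u \<in> V. E v u}) ` V))"

text \<open>Snort position with blue (Left) set B and red (Right) set R; fuel n bounds the
  number of remaining moves (n = card V suffices from the empty colouring).\<close>
fun snort_pos :: "nat \<Rightarrow> nat set \<Rightarrow> (nat \<Rightarrow> nat \<Rightarrow> bool) \<Rightarrow> nat set \<Rightarrow> nat set \<Rightarrow> pgame" where
  "snort_pos 0 V E B R = Game [] []"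
| "snort_pos (Suc n) V E B R =
     Game (map (\<lambda>v. snort_pos n V E (insert v B) R)
             (sorted_list_of_set {v \<in> V - B - R. \<forall>u\<in>R. \<not> E u v}))
          (map (\<lambda>v. snort_pos n V E B (insert v R))
             (sorted_list_of_set {v \<in> V - B - R. \<forall>u\<in>B. \<not> E u v}))"

definition snort :: "nat set \<Rightarrow> (nat \<Rightarrow> nat \<Rightarrow> bool) \<Rightarrow> pgame" where
  "snort V E = snort_pos (card V) V E {} {}"

end

theory Submission
  imports Defs
begin

(* Take the tree with a centre joined to d hubs, each carrying d leaves (d odd); its maximum
   degree is d + 1. Once Left colours the centre, Right can never colour a hub, so Left claims
   every second untouched star and with it d private leaves: a potential argument shows that this
   opening is worth at least d (d div 2) - 1, and by symmetry Right's opening at the centre is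
   worth at most the negative. A position at least a number x has its right wall at least x - 1
   at every temperature, and dually, so the scaffolds of the whole game cannot meet below
   temperature d (d div 2) - 2, which is quadratic in the degree. *)

section \<open>Comparison and negation of games\<close>

fun left_opts :: "pgame \<Rightarrow> pgame list" where
  "left_opts (Game l r) = l"

fun right_opts :: "pgame \<Rightarrow> pgame list" where
  "right_opts (Game l r) = r"

lemma size_left_opt: "g \<in> set (left_opts G) \<Longrightarrow> size g < size G"
  by (cases G) (auto dest: size_opt_L)

lemma size_right_opt: "g \<in> set (right_opts G) \<Longrightarrow> size g < size G"
  by (cases G) (auto dest: size_opt_R)

lemma game_ge_iff_opts:
  "game_ge G H \<longleftrightarrow>
     (\<forall>gr\<in>set (right_opts G). \<not> game_ge H gr) \<and> (\<forall>hl\<in>set (left_opts H). \<not> game_ge hl G)"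
  by (cases G; cases H) auto

lemma not_game_ge_cases:
  "\<not> game_ge G H \<Longrightarrow>
     (\<exists>gr\<in>set (right_opts G). game_ge H gr) \<or> (\<exists>hl\<in>set (left_opts H). game_ge hl G)"
  by (subst (asm) game_ge_iff_opts) auto

lemma not_game_ge_if_left_opt_ge:
  "gl \<in> set (left_opts G) \<Longrightarrow> game_ge gl H \<Longrightarrow> \<not> game_ge H G"
  by (subst game_ge_iff_opts) auto

lemma game_ge_refl: "game_ge G G"
proof (induction G rule: measure_induct_rule[of size])
  case (less G)
  show ?case
  proof (subst game_ge_iff_opts, intro conjI ballI notI)
    fix gr assume gr: "gr \<in> set (right_opts G)" and "game_ge G gr"
    then have "\<not> game_ge gr gr" by (subst (asm) game_ge_iff_opts) auto
    with less size_right_opt[OF gr] show False by auto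
  next
    fix gl assume gl: "gl \<in> set (left_opts G)" and "game_ge gl G"
    then have "\<not> game_ge gl gl" by (subst (asm) game_ge_iff_opts) auto
    with less size_left_opt[OF gl] show False by auto
  qed
qed

lemma game_ge_trans: "game_ge G H \<Longrightarrow> game_ge H K \<Longrightarrow> game_ge G K"
proof (induction "size G + size H + size K" arbitrary: G H K rule: less_induct)
  case less
  show ?case
  proof (subst game_ge_iff_opts, intro conjI ballI notI)
    fix gr assume gr: "gr \<in> set (right_opts G)" and "game_ge K gr"
    then have "game_ge H gr" using less.hyps[of H K gr] less.prems(2) size_right_opt[OF gr] by simp
    moreover have "\<not> game_ge H gr" using less.prems(1) gr by (subst (asm) game_ge_iff_opts) auto
    ultimately show False by simp
  next
    fix kl assume kl: "kl \<in> set (left_opts K)" and "game_ge kl G"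
    then have "game_ge kl H" using less.hyps[of kl G H] less.prems(1) size_left_opt[OF kl] by simp
    moreover have "\<not> game_ge kl H" using less.prems(2) kl by (subst (asm) game_ge_iff_opts) auto
    ultimately show False by simp
  qed
qed

lemma game_eq_refl: "game_eq G G"
  by (simp add: game_eq_def game_ge_refl)

fun neg_game :: "pgame \<Rightarrow> pgame" where
  "neg_game (Game l r) = Game (map neg_game r) (map neg_game l)"

lemma left_opts_neg_game: "left_opts (neg_game G) = map neg_game (right_opts G)"
  by (cases G) auto

lemma right_opts_neg_game: "right_opts (neg_game G) = map neg_game (left_opts G)"
  by (cases G) auto

lemma neg_game_neg_game [simp]: "neg_game (neg_game G) = G"
proof (induction G rule: measure_induct_rule[of size])
  case (less G)
  obtain l r where G: "G = Game l r" by (cases G)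
  have "map (neg_game \<circ> neg_game) l = l" by (rule map_idI) (use less G size_opt_L in auto)
  moreover have "map (neg_game \<circ> neg_game) r = r" by (rule map_idI) (use less G size_opt_R in auto)
  ultimately show ?case by (simp add: G)
qed

lemma game_ge_neg_game_iff: "game_ge (neg_game G) (neg_game H) \<longleftrightarrow> game_ge H G"
proof (induction "size G + size H" arbitrary: G H rule: less_induct)
  case less
  have "game_ge (neg_game H) (neg_game gl) \<longleftrightarrow> game_ge gl H" if "gl \<in> set (left_opts G)" for gl
    using less size_left_opt[OF that] by force
  moreover have "game_ge (neg_game hr) (neg_game G) \<longleftrightarrow> game_ge G hr" if "hr \<in> set (right_opts H)" for hr
    using less size_right_opt[OF that] by force
  ultimately show ?case
    by (subst game_ge_iff_opts, subst (2) game_ge_iff_opts)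
      (auto simp: left_opts_neg_game right_opts_neg_game)
qed

lemma game_eq_neg_game_swap: "game_eq (neg_game G) H \<Longrightarrow> game_eq G (neg_game H)"
  by (metis game_eq_def game_ge_neg_game_iff neg_game_neg_game)

section \<open>Canonical numbers\<close>

definition canonical_numbers :: "pgame set" where
  "canonical_numbers = range (\<lambda>(k, m). num_game k m)"

fun dyadic_value :: "pgame \<Rightarrow> real" where
  "dyadic_value (Game [] []) = 0"
| "dyadic_value (Game [l] []) = dyadic_value l + 1"
| "dyadic_value (Game [] [r]) = dyadic_value r - 1"
| "dyadic_value (Game [l] [r]) = (dyadic_value l + dyadic_value r) / 2"
| "dyadic_value _ = 0"

lemma num_game_canonical [simp]: "num_game k m \<in> canonical_numbers"
  unfolding canonical_numbers_def by (auto intro: image_eqI[of _ _ "(k, m)"])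

lemma int_game_canonical [simp]: "int_game m \<in> canonical_numbers"
  using num_game_canonical[of 0 m] by simp

lemma dyadic_value_int_game [simp]: "dyadic_value (int_game m) = of_int m"
proof -
  have "dyadic_value (pos_int_game n) = n" "dyadic_value (neg_int_game n) = - real n" for n
    by (induction n) auto
  then show ?thesis by (auto simp: int_game_def)
qed

lemma dyadic_value_num_game [simp]: "dyadic_value (num_game k m) = of_int m / 2 ^ k"
proof (induction k arbitrary: m)
  case (Suc k)
  show ?case
  proof (cases "even m")
    case True
    then show ?thesis using Suc by (auto elim!: evenE simp: field_simps)
  next
    case False
    have "real_of_int ((m - 1) div 2) = (of_int m - 1) / 2" "real_of_int ((m + 1) div 2) = (of_int m + 1) / 2"
      using False by (auto elim!: oddE)
    then have "dyadic_value (num_game (Suc k) m) = ((of_int m - 1) / 2 / 2 ^ k + (of_int m + 1) / 2 / 2 ^ k) / 2"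
      using False by (simp only: num_game.simps dyadic_value.simps Suc.IH if_False)
    then show ?thesis by (simp add: field_simps)
  qed
qed simp

lemma num_game_lowest_terms:
  "\<exists>k' m'. num_game k m = num_game k' m' \<and> (k' = 0 \<or> odd m')"
proof (induction k arbitrary: m)
  case (Suc k)
  then show ?case by (cases "even m") (simp, metis num_game.simps(2))
qed blast

lemma canonical_lowest_terms:
  "x \<in> canonical_numbers \<Longrightarrow> \<exists>k m. x = num_game k m \<and> (k = 0 \<or> odd m)"
  unfolding canonical_numbers_def using num_game_lowest_terms by fast

lemma left_opts_int_game: "left_opts (int_game m) = (if 0 < m then [int_game (m - 1)] else [])"
proof -
  have "nat m = Suc (nat (m - 1))" if "0 < m" using that by simp
  moreover have "left_opts (neg_int_game n) = []" for n by (cases n) auto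
  ultimately show ?thesis by (auto simp: int_game_def)
qed

lemma right_opts_int_game: "right_opts (int_game m) = (if m < 0 then [int_game (m + 1)] else [])"
proof -
  have "nat (- m) = Suc (nat (- (m + 1)))" if "m < 0" using that by simp
  moreover have "right_opts (pos_int_game n) = []" for n by (cases n) auto
  ultimately show ?thesis by (auto simp: int_game_def)
qed

lemma left_opt_num_game:
  assumes "k = 0 \<or> odd m" and "0 < k \<or> 0 < m"
  shows "left_opts (num_game k m) = [num_game k (m - 1)]"
  using assms
  by (cases k) (auto simp: left_opts_int_game intro: arg_cong2[where f = num_game] elim!: oddE)

lemma right_opt_num_game:
  assumes "k = 0 \<or> odd m" and "0 < k \<or> m < 0"
  shows "right_opts (num_game k m) = [num_game k (m + 1)]"
  using assms
  by (cases k) (auto simp: right_opts_int_game elim!: oddE)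

lemma canonical_left_opt:
  assumes "x \<in> canonical_numbers" "y \<in> set (left_opts x)"
  shows "y \<in> canonical_numbers \<and> dyadic_value y < dyadic_value x"
proof -
  obtain k m where x: "x = num_game k m" "k = 0 \<or> odd m" using canonical_lowest_terms assms(1) by blast
  have "0 < k \<or> 0 < m" using assms(2) x by (cases k) (auto simp: left_opts_int_game split: if_splits)
  then show ?thesis using assms(2) x by (simp add: left_opt_num_game divide_strict_right_mono)
qed

lemma canonical_right_opt:
  assumes "x \<in> canonical_numbers" "y \<in> set (right_opts x)"
  shows "y \<in> canonical_numbers \<and> dyadic_value x < dyadic_value y"
proof -
  obtain k m where x: "x = num_game k m" "k = 0 \<or> odd m" using canonical_lowest_terms assms(1) by blast
  have "0 < k \<or> m < 0" using assms(2) x by (cases k) (auto simp: right_opts_int_game split: if_splits)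
  then show ?thesis using assms(2) x by (simp add: right_opt_num_game divide_strict_right_mono)
qed

lemma dyadic_less_imp_succ_le:
  fixes a b :: int
  assumes "of_int a / 2 ^ k < (of_int b / 2 ^ j :: real)" "j \<le> k"
  shows "(of_int a + 1) / 2 ^ k \<le> (of_int b / 2 ^ j :: real)"
proof -
  have e: "(2::real) ^ k = 2 ^ j * 2 ^ (k - j)" using assms(2) by (simp flip: power_add)
  have "real_of_int a < of_int (b * 2 ^ (k - j))" using assms(1) unfolding e by (simp add: field_simps)
  then have "a + 1 \<le> b * 2 ^ (k - j)" by (simp only: of_int_less_iff)
  then have "real_of_int (a + 1) \<le> of_int (b * 2 ^ (k - j))" by (simp only: of_int_le_iff)
  then have "(of_int a + 1) / 2 ^ k \<le> of_int b * 2 ^ (k - j) / (2 ^ k :: real)"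
    by (intro divide_right_mono) auto
  then show ?thesis unfolding e by simp
qed

text \<open>Between two distinct canonical numbers there is an option of one of them: the one
  with the larger denominator moves by a single unit of that denominator.\<close>
lemma canonical_numbers_less_cases:
  assumes "x \<in> canonical_numbers" "y \<in> canonical_numbers" "dyadic_value x < dyadic_value y"
  shows "(\<exists>xr\<in>set (right_opts x). dyadic_value xr \<le> dyadic_value y) \<or>
         (\<exists>yl\<in>set (left_opts y). dyadic_value x \<le> dyadic_value yl)"
proof -
  obtain k m where x: "x = num_game k m" "k = 0 \<or> odd m" using canonical_lowest_terms assms(1) by blast
  obtain j p where y: "y = num_game j p" "j = 0 \<or> odd p" using canonical_lowest_terms assms(2) by blast
  have lt: "of_int m / 2 ^ k < (of_int p / 2 ^ j :: real)" using assms(3) x y by simp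
  consider "j \<le> k" "0 < k \<or> m < 0" | "k = 0" "j = 0" "0 \<le> m" | "k < j" by linarith
  then show ?thesis
  proof cases
    case 1
    then show ?thesis using x y dyadic_less_imp_succ_le[OF lt 1(1)] by (simp add: right_opt_num_game)
  next
    case 2
    then show ?thesis using x y lt by (simp add: left_opts_int_game)
  next
    case 3
    have "- of_int p / 2 ^ j < (- of_int m / 2 ^ k :: real)" using lt by simp
    then have "of_int m / 2 ^ k \<le> (of_int p - 1) / (2 ^ j :: real)"
      using dyadic_less_imp_succ_le[of "- p" j "- m" k] 3 by (simp add: field_simps)
    then show ?thesis using x y 3 by (simp add: left_opt_num_game)
  qed
qed

lemma game_ge_canonical_iff:
  "x \<in> canonical_numbers \<Longrightarrow> y \<in> canonical_numbers \<Longrightarrow> game_ge x y \<longleftrightarrow> dyadic_value y \<le> dyadic_value x"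
proof (induction "size x + size y" arbitrary: x y rule: less_induct)
  case less
  have IH_right: "game_ge y xr \<longleftrightarrow> dyadic_value xr \<le> dyadic_value y" if "xr \<in> set (right_opts x)" for xr
    using less canonical_right_opt size_right_opt that by (metis add.commute add_strict_left_mono)
  have IH_left: "game_ge yl x \<longleftrightarrow> dyadic_value x \<le> dyadic_value yl" if "yl \<in> set (left_opts y)" for yl
    using less canonical_left_opt size_left_opt that by (metis add.commute add_strict_left_mono)
  have "game_ge x y \<longleftrightarrow> (\<forall>xr\<in>set (right_opts x). dyadic_value y < dyadic_value xr) \<and>
                           (\<forall>yl\<in>set (left_opts y). dyadic_value yl < dyadic_value x)"
    by (subst game_ge_iff_opts) (auto simp: IH_right IH_left not_le)
  also have "\<dots> \<longleftrightarrow> dyadic_value y \<le> dyadic_value x"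
  proof
    assume "(\<forall>xr\<in>set (right_opts x). dyadic_value y < dyadic_value xr) \<and>
            (\<forall>yl\<in>set (left_opts y). dyadic_value yl < dyadic_value x)"
    then show "dyadic_value y \<le> dyadic_value x"
      using canonical_numbers_less_cases[OF less.prems] by force
  next
    assume "dyadic_value y \<le> dyadic_value x"
    then show "(\<forall>xr\<in>set (right_opts x). dyadic_value y < dyadic_value xr) \<and>
               (\<forall>yl\<in>set (left_opts y). dyadic_value yl < dyadic_value x)"
      using canonical_left_opt[OF less.prems(2)] canonical_right_opt[OF less.prems(1)] by force
  qed
  finally show ?case .
qed

lemma number_value_canonical:
  assumes "x \<in> canonical_numbers" "game_eq G x"
  shows "is_number G" "number_value G = dyadic_value x"
proof -
  obtain k m where x: "x = num_game k m" using assms(1) canonical_lowest_terms by blast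
  then show "is_number G" unfolding is_number_def using assms by blast
  show "number_value G = dyadic_value x"
    unfolding number_value_def
  proof (rule the_equality)
    show "\<exists>k m. dyadic_value x = of_int m / 2 ^ k \<and> game_eq G (num_game k m)"
      using assms x by auto
  next
    fix v :: real assume "\<exists>k m. v = of_int m / 2 ^ k \<and> game_eq G (num_game k m)"
    then obtain k' m' where "v = of_int m' / 2 ^ k'" "game_eq G (num_game k' m')" by blast
    then show "v = dyadic_value x"
      using assms game_ge_canonical_iff[OF assms(1) num_game_canonical, of k' m']
        game_ge_canonical_iff[OF num_game_canonical assms(1), of k' m']
      by (auto simp: game_eq_def intro: game_ge_trans)
  qed
qed

lemma is_number_canonical: "is_number G \<Longrightarrow> \<exists>x\<in>canonical_numbers. game_eq G x"
  unfolding is_number_def by auto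

lemma game_ge_number_iff:
  assumes "is_number G" "x \<in> canonical_numbers"
  shows "game_ge G x \<longleftrightarrow> dyadic_value x \<le> number_value G"
    and "game_ge x G \<longleftrightarrow> number_value G \<le> dyadic_value x"
proof -
  obtain N where N: "N \<in> canonical_numbers" "game_eq G N" using is_number_canonical assms(1) by blast
  have "game_ge G x \<longleftrightarrow> game_ge N x" "game_ge x G \<longleftrightarrow> game_ge x N"
    using N(2) game_ge_trans unfolding game_eq_def by blast+
  then show "game_ge G x \<longleftrightarrow> dyadic_value x \<le> number_value G"
    and "game_ge x G \<longleftrightarrow> number_value G \<le> dyadic_value x"
    using game_ge_canonical_iff N assms(2) number_value_canonical(2) by auto
qed

text \<open>Simplicity theorem: the smallest canonical number fitting between the options equals the game.\<close>
lemma is_number_if_number_fits: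
  assumes "x \<in> canonical_numbers"
    and "\<forall>gl\<in>set (left_opts G). \<not> game_ge gl x" "\<forall>gr\<in>set (right_opts G). \<not> game_ge x gr"
  shows "is_number G"
proof -
  define fits where "fits x \<longleftrightarrow> x \<in> canonical_numbers \<and> (\<forall>gl\<in>set (left_opts G). \<not> game_ge gl x) \<and>
    (\<forall>gr\<in>set (right_opts G). \<not> game_ge x gr)" for x
  obtain z where z: "fits z" "\<And>w. fits w \<Longrightarrow> size z \<le> size w"
    using ex_has_least_nat[of fits x size] assms fits_def by blast
  have z_can: "z \<in> canonical_numbers" using z fits_def by blast
  have "game_ge G z"
  proof (subst game_ge_iff_opts, intro conjI ballI notI)
    fix gr assume "gr \<in> set (right_opts G)" "game_ge z gr"
    then show False using z(1) fits_def by blast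
  next
    fix zl assume zl: "zl \<in> set (left_opts z)" and zl_ge: "game_ge zl G"
    have zl_can: "zl \<in> canonical_numbers" "game_ge z zl"
      using canonical_left_opt[OF z_can zl] game_ge_canonical_iff z_can by auto
    have "\<not> fits zl" using z(2) size_left_opt[OF zl] by force
    then obtain g where "g \<in> set (left_opts G) \<and> game_ge g zl \<or> g \<in> set (right_opts G) \<and> game_ge zl g"
      using zl_can fits_def by blast
    moreover have "\<not> game_ge g zl" if "g \<in> set (left_opts G)"
      using zl_ge that by (subst (asm) game_ge_iff_opts) auto
    moreover have "\<not> game_ge z g" if "g \<in> set (right_opts G)"
      using z(1) that fits_def by blast
    ultimately show False using zl_can(2) game_ge_trans by blast
  qed
  moreover have "game_ge z G"
  proof (subst game_ge_iff_opts, intro conjI ballI notI)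
    fix gl assume "gl \<in> set (left_opts G)" "game_ge gl z"
    then show False using z(1) fits_def by blast
  next
    fix zr assume zr: "zr \<in> set (right_opts z)" and zr_le: "game_ge G zr"
    have zr_can: "zr \<in> canonical_numbers" "game_ge zr z"
      using canonical_right_opt[OF z_can zr] game_ge_canonical_iff z_can by auto
    have "\<not> fits zr" using z(2) size_right_opt[OF zr] by force
    then obtain g where "g \<in> set (left_opts G) \<and> game_ge g zr \<or> g \<in> set (right_opts G) \<and> game_ge zr g"
      using zr_can fits_def by blast
    moreover have "\<not> game_ge zr g" if "g \<in> set (right_opts G)"
      using zr_le that by (subst (asm) game_ge_iff_opts) auto
    moreover have "\<not> game_ge g z" if "g \<in> set (left_opts G)"
      using z(1) that fits_def by blast
    ultimately show False using zr_can(2) game_ge_trans by blast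
  qed
  ultimately show ?thesis using number_value_canonical(1)[OF z_can] game_eq_def by blast
qed

lemma neg_game_num_game: "neg_game (num_game k m) = num_game k (- m)"
proof (induction k arbitrary: m)
  case 0
  have "neg_game (pos_int_game n) = neg_int_game n" for n by (induction n) auto
  then have "neg_game (neg_int_game n) = pos_int_game n" for n by (metis neg_game_neg_game)
  with \<open>neg_game (pos_int_game _) = _\<close> show ?case by (auto simp: int_game_def)
next
  case (Suc k)
  show ?case
  proof (cases "even m")
    case True
    then have "(- m) div 2 = - (m div 2)" by (elim evenE) simp
    then show ?thesis using True Suc by simp
  next
    case False
    then have "(- m - 1) div 2 = - ((m + 1) div 2)" "(- m + 1) div 2 = - ((m - 1) div 2)"
      by (elim oddE, simp)+
    then show ?thesis using False Suc by simp
  qed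
qed

lemma is_number_neg_game:
  assumes "is_number G"
  shows "is_number (neg_game G)"
proof -
  obtain k m where "game_eq G (num_game k m)" using assms unfolding is_number_def by blast
  then have "game_eq (neg_game G) (num_game k (- m))"
    using game_eq_neg_game_swap[of "neg_game G" "num_game k m"] by (simp add: neg_game_num_game)
  then show ?thesis unfolding is_number_def by blast
qed

lemma game_eq_pos_int_game_Suc:
  assumes "GL \<noteq> []" "\<forall>g\<in>set GL. game_eq g (pos_int_game j)"
  shows "game_eq (Game GL []) (pos_int_game (Suc j))"
  unfolding game_eq_def
proof
  show "game_ge (Game GL []) (pos_int_game (Suc j))"
  proof (subst game_ge_iff_opts, simp, intro notI)
    assume "game_ge (pos_int_game j) (Game GL [])"
    moreover obtain g where "g \<in> set GL" using assms(1) by (cases GL) auto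
    ultimately show False using assms(2) by (subst (asm) game_ge_iff_opts) (auto simp: game_eq_def)
  qed
  show "game_ge (pos_int_game (Suc j)) (Game GL [])"
  proof (subst game_ge_iff_opts, simp, intro ballI notI)
    fix g assume "g \<in> set GL" "game_ge g (Game [pos_int_game j] [])"
    then have "game_ge (pos_int_game j) (Game [pos_int_game j] [])"
      using assms(2) game_ge_trans game_eq_def by blast
    then show False using game_ge_refl by (subst (asm) game_ge_iff_opts) auto
  qed
qed

lemma game_ge_int_gameI:
  assumes "\<forall>gr\<in>set (right_opts G). \<not> game_ge (int_game b) gr"
    and "0 < b \<Longrightarrow> \<exists>gl\<in>set (left_opts G). game_ge gl (int_game (b - 1))"
  shows "game_ge G (int_game b)"
proof (subst game_ge_iff_opts, intro conjI ballI)
  fix hl assume "hl \<in> set (left_opts (int_game b))"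
  then have "0 < b" "hl = int_game (b - 1)" by (simp_all add: left_opts_int_game split: if_splits)
  then show "\<not> game_ge hl G" using assms(2) by (subst game_ge_iff_opts) auto
qed (use assms(1) in blast)

lemma not_int_game_ge_zero_game: "b < 0 \<Longrightarrow> \<not> game_ge (int_game b) (Game [] [])"
proof -
  assume "b < 0"
  then have "game_ge (Game [] []) (int_game (b + 1))"
    by (subst game_ge_iff_opts) (simp add: left_opts_int_game)
  then show ?thesis using \<open>b < 0\<close> by (subst game_ge_iff_opts) (simp add: right_opts_int_game)
qed

section \<open>Thermographs\<close>

abbreviation left_wall :: "pgame \<Rightarrow> real \<Rightarrow> real" where
  "left_wall G \<equiv> fst (thermo_walls G)"

abbreviation right_wall :: "pgame \<Rightarrow> real \<Rightarrow> real" where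
  "right_wall G \<equiv> snd (thermo_walls G)"

definition left_scaffold :: "pgame \<Rightarrow> real \<Rightarrow> real" where
  "left_scaffold G = scaffold_L (map thermo_walls (left_opts G))"

definition right_scaffold :: "pgame \<Rightarrow> real \<Rightarrow> real" where
  "right_scaffold G = scaffold_R (map thermo_walls (right_opts G))"

definition critical_temp :: "pgame \<Rightarrow> real" where
  "critical_temp G = crit_temp (map thermo_walls (left_opts G)) (map thermo_walls (right_opts G))"

definition scaffold_crossings :: "pgame \<Rightarrow> real set" where
  "scaffold_crossings G = {t. -1 \<le> t \<and> left_scaffold G t \<le> right_scaffold G t}"

lemma critical_temp_eq_Inf: "critical_temp G = Inf (scaffold_crossings G)"
  unfolding critical_temp_def crit_temp_def scaffold_crossings_def left_scaffold_def right_scaffold_def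
  by simp

lemma temperature_eq_critical_temp: "\<not> is_number G \<Longrightarrow> temperature G = critical_temp G"
  by (cases G) (simp add: critical_temp_def)

lemma walls_of_number: "is_number G \<Longrightarrow> left_wall G t = number_value G \<and> right_wall G t = number_value G"
  by (cases G) simp

lemma walls_of_non_number:
  "\<not> is_number G \<Longrightarrow>
     left_wall G t = (if t \<le> critical_temp G then left_scaffold G t else left_scaffold G (critical_temp G)) \<and>
     right_wall G t = (if t \<le> critical_temp G then right_scaffold G t else left_scaffold G (critical_temp G))"
  by (cases G) (simp add: Let_def left_scaffold_def right_scaffold_def critical_temp_def)

lemma left_scaffold_eq: "left_scaffold G t = Max ((\<lambda>g. right_wall g t - t) ` set (left_opts G))"
  unfolding left_scaffold_def scaffold_L_def by (simp add: image_image)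

lemma right_scaffold_eq: "right_scaffold G t = Min ((\<lambda>g. left_wall g t + t) ` set (right_opts G))"
  unfolding right_scaffold_def scaffold_R_def by (simp add: image_image)

lemma right_wall_le_left_scaffold: "g \<in> set (left_opts G) \<Longrightarrow> right_wall g t - t \<le> left_scaffold G t"
  unfolding left_scaffold_eq by (rule Max_ge) auto

lemma left_scaffold_le:
  "left_opts G \<noteq> [] \<Longrightarrow> (\<And>g. g \<in> set (left_opts G) \<Longrightarrow> right_wall g t - t \<le> c) \<Longrightarrow>
     left_scaffold G t \<le> c"
  unfolding left_scaffold_eq by (subst Max_le_iff) auto

lemma right_scaffold_le_left_wall: "g \<in> set (right_opts G) \<Longrightarrow> right_scaffold G t \<le> left_wall g t + t"
  unfolding right_scaffold_eq by (rule Min_le) auto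

lemma ge_right_scaffold:
  "right_opts G \<noteq> [] \<Longrightarrow> (\<And>g. g \<in> set (right_opts G) \<Longrightarrow> c \<le> left_wall g t + t) \<Longrightarrow>
     c \<le> right_scaffold G t"
  unfolding right_scaffold_eq by (subst Min_ge_iff) auto

lemma zero_game_is_number: "is_number (Game [] [])"
  using number_value_canonical(1)[OF num_game_canonical game_eq_refl, of 0 0] by (simp add: int_game_def)

lemma finite_family_bounded_above:
  fixes f :: "'a \<Rightarrow> 'b \<Rightarrow> real"
  assumes "finite A" "\<forall>x\<in>A. \<exists>B. \<forall>t\<in>T. f x t \<le> B"
  shows "\<exists>B\<ge>0. \<forall>x\<in>A. \<forall>t\<in>T. f x t \<le> B"
  using assms
proof (induction A rule: finite_induct)
  case (insert a A)
  then obtain B B' where "B \<ge> 0" "\<forall>x\<in>A. \<forall>t\<in>T. f x t \<le> B" "\<forall>t\<in>T. f a t \<le> B'" by auto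
  then show ?case by (intro exI[of _ "max B B'"]) (auto intro: max.coboundedI1 max.coboundedI2)
qed auto

text \<open>On a side without options the scaffold is the unspecified value \<open>Max {}\<close> or \<open>Min {}\<close>,
  so the bounds below carry the constant \<open>junk\<close>.\<close>
lemma walls_bounded: "\<exists>B. \<forall>t\<ge>-1. \<bar>left_wall G t\<bar> \<le> B \<and> \<bar>right_wall G t\<bar> \<le> B"
proof (induction G rule: measure_induct_rule[of size])
  case (less G)
  show ?case
  proof (cases "is_number G")
    case True
    then show ?thesis using walls_of_number by auto
  next
    case False
    have "\<exists>B\<ge>0. \<forall>g\<in>set (left_opts G) \<union> set (right_opts G). \<forall>t\<in>{-1..}.
            max \<bar>left_wall g t\<bar> \<bar>right_wall g t\<bar> \<le> B"
      by (rule finite_family_bounded_above) (use less size_left_opt size_right_opt in fastforce)+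
    then obtain B where B: "B \<ge> 0" "\<And>g t. g \<in> set (left_opts G) \<union> set (right_opts G) \<Longrightarrow> t \<ge> -1 \<Longrightarrow>
        \<bar>left_wall g t\<bar> \<le> B \<and> \<bar>right_wall g t\<bar> \<le> B"
      by auto
    define junk where "junk = \<bar>Max ({}::real set)\<bar> + \<bar>Min ({}::real set)\<bar>"
    have left: "\<bar>left_scaffold G t\<bar> \<le> B + \<bar>t\<bar> + junk" if "t \<ge> -1" for t
    proof (cases "left_opts G = []")
      case False
      have "left_scaffold G t \<in> (\<lambda>g. right_wall g t - t) ` set (left_opts G)"
        unfolding left_scaffold_eq by (rule Max_in) (use False in auto)
      then show ?thesis using B(2) that junk_def by fastforce
    qed (simp add: left_scaffold_eq B junk_def)
    have right: "\<bar>right_scaffold G t\<bar> \<le> B + \<bar>t\<bar> + junk" if "t \<ge> -1" for t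
    proof (cases "right_opts G = []")
      case False
      have "right_scaffold G t \<in> (\<lambda>g. left_wall g t + t) ` set (right_opts G)"
        unfolding right_scaffold_eq by (rule Min_in) (use False in auto)
      then show ?thesis using B(2) that junk_def by fastforce
    qed (simp add: right_scaffold_eq B junk_def)
    define ts where "ts = critical_temp G"
    have "\<bar>left_wall G t\<bar> \<le> B + 1 + \<bar>ts\<bar> + junk + \<bar>left_scaffold G ts\<bar> \<and>
          \<bar>right_wall G t\<bar> \<le> B + 1 + \<bar>ts\<bar> + junk + \<bar>left_scaffold G ts\<bar>" if "t \<ge> -1" for t
    proof (cases "t \<le> ts")
      case True
      then have "\<bar>t\<bar> \<le> 1 + \<bar>ts\<bar>" using that by linarith
      then show ?thesis using walls_of_non_number[OF False, of t] left[OF that] right[OF that] True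
        unfolding ts_def[symmetric] by (simp add: add_increasing2)
    next
      case False
      have "0 \<le> B + 1 + \<bar>ts\<bar> + junk" using B(1) junk_def by simp
      then show ?thesis using walls_of_non_number[OF \<open>\<not> is_number G\<close>, of t] False
        unfolding ts_def[symmetric] by simp
    qed
    then show ?thesis by blast
  qed
qed

lemma scaffold_crossings_nonempty:
  assumes "\<not> is_number G"
  shows "scaffold_crossings G \<noteq> {}"
proof -
  have "\<exists>B\<ge>0. \<forall>g\<in>set (left_opts G) \<union> set (right_opts G). \<forall>t\<in>{-1..}.
          max \<bar>left_wall g t\<bar> \<bar>right_wall g t\<bar> \<le> B"
    by (rule finite_family_bounded_above) (use walls_bounded in fastforce)+
  then obtain B where B: "B \<ge> 0" "\<And>g t. g \<in> set (left_opts G) \<union> set (right_opts G) \<Longrightarrow> t \<ge> -1 \<Longrightarrow>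
      \<bar>left_wall g t\<bar> \<le> B \<and> \<bar>right_wall g t\<bar> \<le> B"
    by auto
  have options: "left_opts G \<noteq> [] \<or> right_opts G \<noteq> []"
    using assms zero_game_is_number by (cases G) auto
  define junk where "junk = \<bar>Max ({}::real set)\<bar> + \<bar>Min ({}::real set)\<bar>"
  define t0 where "t0 = B + junk"
  have t0: "-1 \<le> t0" using B(1) t0_def junk_def by simp
  have "left_scaffold G t0 \<le> (if left_opts G = [] then \<bar>Max ({}::real set)\<bar> else - junk)"
  proof (cases "left_opts G = []")
    case False
    have "left_scaffold G t0 \<le> B - t0"
      by (rule left_scaffold_le[OF False]) (use B(2) t0 in fastforce)
    then show ?thesis using False t0_def by simp
  qed (simp add: left_scaffold_eq)
  moreover have "(if right_opts G = [] then - \<bar>Min ({}::real set)\<bar> else junk) \<le> right_scaffold G t0"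
  proof (cases "right_opts G = []")
    case False
    have "t0 - B \<le> right_scaffold G t0"
      by (rule ge_right_scaffold[OF False]) (use B(2) t0 in fastforce)
    then show ?thesis using False t0_def by simp
  qed (simp add: right_scaffold_eq)
  ultimately have "left_scaffold G t0 \<le> right_scaffold G t0"
    using options junk_def by (auto split: if_splits)
  then show ?thesis unfolding scaffold_crossings_def using t0 by blast
qed

lemma critical_temp_ge: "\<not> is_number G \<Longrightarrow> -1 \<le> critical_temp G"
  unfolding critical_temp_eq_Inf
  by (rule cInf_greatest[OF scaffold_crossings_nonempty]) (auto simp: scaffold_crossings_def)

lemma critical_temp_le: "t \<in> scaffold_crossings G \<Longrightarrow> critical_temp G \<le> t"
  unfolding critical_temp_eq_Inf by (rule cInf_lower) (auto simp: scaffold_crossings_def bdd_below_def)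

text \<open>Every game without options on one side equals an integer; we only need, and only prove,
  this for Snort positions.\<close>
fun one_sided_numeric :: "pgame \<Rightarrow> bool" where
  "one_sided_numeric (Game GL GR) \<longleftrightarrow>
     ((GL = [] \<or> GR = []) \<longrightarrow> is_number (Game GL GR)) \<and>
     (\<forall>g\<in>set GL. one_sided_numeric g) \<and> (\<forall>g\<in>set GR. one_sided_numeric g)"

lemma one_sided_numeric_left_opt:
  "one_sided_numeric G \<Longrightarrow> g \<in> set (left_opts G) \<Longrightarrow> one_sided_numeric g"
  by (cases G) auto

lemma one_sided_numeric_right_opt:
  "one_sided_numeric G \<Longrightarrow> g \<in> set (right_opts G) \<Longrightarrow> one_sided_numeric g"
  by (cases G) auto

lemma one_sided_numeric_opts:
  "one_sided_numeric G \<Longrightarrow> \<not> is_number G \<Longrightarrow> left_opts G \<noteq> [] \<and> right_opts G \<noteq> []"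
  by (cases G) auto

text \<open>The wall estimates below only need that, on a down-closed set \<open>A\<close> of temperatures, walls are
  scaffolds frozen at the critical temperature. This is immediate for \<open>A = {-1}\<close>; the estimates
  there show that the scaffolds meet at the critical temperature, which gives it for \<open>A = {-1..}\<close>.\<close>
locale scaffold_walls =
  fixes A :: "real set"
  assumes A_ge: "\<And>t. t \<in> A \<Longrightarrow> -1 \<le> t"
    and A_down_closed: "\<And>t s. t \<in> A \<Longrightarrow> -1 \<le> s \<Longrightarrow> s \<le> t \<Longrightarrow> s \<in> A"
    and walls_eq_scaffolds: "\<And>G t. one_sided_numeric G \<Longrightarrow> \<not> is_number G \<Longrightarrow> t \<in> A \<Longrightarrow>
      left_wall G t = left_scaffold G (min t (critical_temp G)) \<and>
      right_wall G t = right_scaffold G (min t (critical_temp G))"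
begin

lemma frozen_temp:
  assumes "\<not> is_number G" "t \<in> A"
  shows "min t (critical_temp G) \<in> A" "min t (critical_temp G) \<le> t"
proof -
  have "-1 \<le> min t (critical_temp G)" using A_ge[OF assms(2)] critical_temp_ge[OF assms(1)] by simp
  then show "min t (critical_temp G) \<in> A" using A_down_closed[OF assms(2)] by simp
qed simp

lemma wall_lower_bounds:
  assumes "one_sided_numeric G" "x \<in> canonical_numbers" "t \<in> A"
  shows "(game_ge G x \<longrightarrow> dyadic_value x - 1 \<le> right_wall G t) \<and>
         (\<not> game_ge x G \<longrightarrow> dyadic_value x - 1 - t \<le> left_wall G t)"
  using assms
proof (induction "size G + size x" arbitrary: G x t rule: less_induct)
  case less
  show ?case
  proof (cases "is_number G")
    case True
    then show ?thesis
      using game_ge_number_iff[OF True less.prems(2)] walls_of_number[OF True, of t] A_ge[OF less.prems(3)]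
      by auto
  next
    case False
    define s where "s = min t (critical_temp G)"
    note s = frozen_temp[OF False less.prems(3), folded s_def]
    have options: "left_opts G \<noteq> []" "right_opts G \<noteq> []"
      using one_sided_numeric_opts[OF less.prems(1) False] by auto
    have walls: "right_wall G t = right_scaffold G s" "left_wall G t = left_scaffold G s"
      using walls_eq_scaffolds[OF less.prems(1) False less.prems(3)] s_def by auto
    have "dyadic_value x - 1 \<le> right_wall G t" if "game_ge G x"
    proof -
      have "dyadic_value x - 1 \<le> right_scaffold G s"
      proof (rule ge_right_scaffold[OF options(2)])
        fix gr assume gr: "gr \<in> set (right_opts G)"
        have "\<not> game_ge x gr" using that gr by (subst (asm) game_ge_iff_opts) auto
        then show "dyadic_value x - 1 \<le> left_wall gr s + s"
          using less.hyps[OF _ one_sided_numeric_right_opt[OF less.prems(1) gr] less.prems(2) s(1)]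
            size_right_opt[OF gr] by simp
      qed
      then show ?thesis using walls by simp
    qed
    moreover have "dyadic_value x - 1 - t \<le> left_wall G t" if "\<not> game_ge x G"
      using not_game_ge_cases[OF that]
    proof
      assume "\<exists>xr\<in>set (right_opts x). game_ge G xr"
      then obtain xr where xr: "xr \<in> set (right_opts x)" "game_ge G xr" by blast
      note xr_can = canonical_right_opt[OF less.prems(2) xr(1)]
      have "\<not> game_ge xr G"
        using number_value_canonical(1)[OF xr_can[THEN conjunct1]] xr(2) False unfolding game_eq_def by blast
      then have "dyadic_value xr - 1 - t \<le> left_wall G t"
        using less.hyps[OF _ less.prems(1) _ less.prems(3)] xr_can size_right_opt[OF xr(1)] by simp
      then show ?thesis using xr_can by simp
    next
      assume "\<exists>gl\<in>set (left_opts G). game_ge gl x"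
      then obtain gl where gl: "gl \<in> set (left_opts G)" "game_ge gl x" by blast
      have "dyadic_value x - 1 \<le> right_wall gl s"
        using less.hyps[OF _ one_sided_numeric_left_opt[OF less.prems(1) gl(1)] less.prems(2) s(1)]
          gl(2) size_left_opt[OF gl(1)] by simp
      then show ?thesis using right_wall_le_left_scaffold[OF gl(1), of s] walls s(2) by simp
    qed
    ultimately show ?thesis by blast
  qed
qed

lemma wall_upper_bounds:
  assumes "one_sided_numeric G" "x \<in> canonical_numbers" "t \<in> A"
  shows "(game_ge x G \<longrightarrow> left_wall G t \<le> dyadic_value x + 1) \<and>
         (\<not> game_ge G x \<longrightarrow> right_wall G t \<le> dyadic_value x + 1 + t)"
  using assms
proof (induction "size G + size x" arbitrary: G x t rule: less_induct)
  case less
  show ?case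
  proof (cases "is_number G")
    case True
    then show ?thesis
      using game_ge_number_iff[OF True less.prems(2)] walls_of_number[OF True, of t] A_ge[OF less.prems(3)]
      by auto
  next
    case False
    define s where "s = min t (critical_temp G)"
    note s = frozen_temp[OF False less.prems(3), folded s_def]
    have options: "left_opts G \<noteq> []" "right_opts G \<noteq> []"
      using one_sided_numeric_opts[OF less.prems(1) False] by auto
    have walls: "right_wall G t = right_scaffold G s" "left_wall G t = left_scaffold G s"
      using walls_eq_scaffolds[OF less.prems(1) False less.prems(3)] s_def by auto
    have "left_wall G t \<le> dyadic_value x + 1" if "game_ge x G"
    proof -
      have "left_scaffold G s \<le> dyadic_value x + 1"
      proof (rule left_scaffold_le[OF options(1)])
        fix gl assume gl: "gl \<in> set (left_opts G)"
        have "\<not> game_ge gl x" using that gl by (subst (asm) game_ge_iff_opts) auto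
        then show "right_wall gl s - s \<le> dyadic_value x + 1"
          using less.hyps[OF _ one_sided_numeric_left_opt[OF less.prems(1) gl] less.prems(2) s(1)]
            size_left_opt[OF gl] by simp
      qed
      then show ?thesis using walls by simp
    qed
    moreover have "right_wall G t \<le> dyadic_value x + 1 + t" if "\<not> game_ge G x"
      using not_game_ge_cases[OF that]
    proof
      assume "\<exists>gr\<in>set (right_opts G). game_ge x gr"
      then obtain gr where gr: "gr \<in> set (right_opts G)" "game_ge x gr" by blast
      have "left_wall gr s \<le> dyadic_value x + 1"
        using less.hyps[OF _ one_sided_numeric_right_opt[OF less.prems(1) gr(1)] less.prems(2) s(1)]
          gr(2) size_right_opt[OF gr(1)] by simp
      then show ?thesis using right_scaffold_le_left_wall[OF gr(1), of s] walls s(2) by simp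
    next
      assume "\<exists>xl\<in>set (left_opts x). game_ge xl G"
      then obtain xl where xl: "xl \<in> set (left_opts x)" "game_ge xl G" by blast
      note xl_can = canonical_left_opt[OF less.prems(2) xl(1)]
      have "\<not> game_ge G xl"
        using number_value_canonical(1)[OF xl_can[THEN conjunct1]] xl(2) False unfolding game_eq_def by blast
      then have "right_wall G t \<le> dyadic_value xl + 1 + t"
        using less.hyps[OF _ less.prems(1) _ less.prems(3)] xl_can size_left_opt[OF xl(1)] by simp
      then show ?thesis using xl_can by simp
    qed
    ultimately show ?thesis by blast
  qed
qed

end

interpretation at_minus_one: scaffold_walls "{-1}"
proof
  fix G and t :: real assume G: "\<not> is_number G" and "t \<in> {-1}"
  then show "left_wall G t = left_scaffold G (min t (critical_temp G)) \<and>
             right_wall G t = right_scaffold G (min t (critical_temp G))"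
    using walls_of_non_number[OF G, of t] critical_temp_ge[OF G] by (simp add: min_def)
qed auto

lemma dyadic_between:
  fixes a b :: real
  assumes "a < b"
  shows "\<exists>k m. a < of_int m / 2 ^ k \<and> of_int m / 2 ^ k < b"
proof -
  obtain n where n: "inverse (real (Suc n)) < b - a" using assms reals_Archimedean diff_gt_0_iff_gt by blast
  have "real (Suc n) \<le> 2 ^ Suc n"
    using less_exp[of "Suc n"] by (metis of_nat_le_iff of_nat_numeral of_nat_power less_imp_le)
  then have "1 / 2 ^ Suc n \<le> inverse (real (Suc n))"
    by (simp add: inverse_eq_divide frac_le)
  then have step: "1 / 2 ^ Suc n < b - a" using n by linarith
  define m where "m = \<lfloor>a * 2 ^ Suc n\<rfloor> + 1"
  have "a * 2 ^ Suc n < of_int m" "of_int m \<le> a * 2 ^ Suc n + 1" unfolding m_def by linarith+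
  then have "a < of_int m / 2 ^ Suc n" "of_int m / 2 ^ Suc n \<le> a + 1 / 2 ^ Suc n"
    by (simp_all add: field_simps)
  then show ?thesis using step by (intro exI[of _ "Suc n"] exI[of _ m]) auto
qed

text \<open>If the scaffolds were apart at \<open>-1\<close>, a number between them would fit between the options.\<close>
lemma right_scaffold_le_left_scaffold_at_minus_one:
  assumes G: "one_sided_numeric G" "\<not> is_number G"
  shows "right_scaffold G (-1) \<le> left_scaffold G (-1)"
proof (rule ccontr)
  assume "\<not> right_scaffold G (-1) \<le> left_scaffold G (-1)"
  then obtain k m where km: "left_scaffold G (-1) < of_int m / 2 ^ k" "of_int m / 2 ^ k < right_scaffold G (-1)"
    using dyadic_between by (meson not_le)
  have "\<not> game_ge gl (num_game k m)" if gl: "gl \<in> set (left_opts G)" for gl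
  proof
    assume "game_ge gl (num_game k m)"
    then have "of_int m / 2 ^ k - 1 \<le> right_wall gl (-1)"
      using at_minus_one.wall_lower_bounds[OF one_sided_numeric_left_opt[OF G(1) gl] num_game_canonical]
      by simp
    then show False using right_wall_le_left_scaffold[OF gl, of "-1"] km by simp
  qed
  moreover have "\<not> game_ge (num_game k m) gr" if gr: "gr \<in> set (right_opts G)" for gr
  proof
    assume "game_ge (num_game k m) gr"
    then have "left_wall gr (-1) \<le> of_int m / 2 ^ k + 1"
      using at_minus_one.wall_upper_bounds[OF one_sided_numeric_right_opt[OF G(1) gr] num_game_canonical]
      by simp
    then show False using right_scaffold_le_left_wall[OF gr, of "-1"] km by simp
  qed
  ultimately show False using is_number_if_number_fits[OF num_game_canonical] G(2) by blast
qed

lemma continuous_on_pos_nbhd: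
  fixes f :: "real \<Rightarrow> real"
  assumes "continuous_on S f" "x \<in> S" "f x > 0"
  shows "\<exists>d>0. \<forall>y\<in>S. \<bar>y - x\<bar> < d \<longrightarrow> f y > 0"
proof -
  have "eventually (\<lambda>y. 0 < f y) (at x within S)"
    using assms continuous_on_def order_tendstoD(1) by blast
  then obtain d where "d > 0" "\<forall>y\<in>S. y \<noteq> x \<and> dist y x < d \<longrightarrow> 0 < f y"
    unfolding eventually_at by blast
  then show ?thesis using assms(3) by (intro exI[of _ d]) (auto simp: dist_real_def)
qed

lemma continuous_on_Max_image:
  fixes f :: "'a \<Rightarrow> real \<Rightarrow> real"
  shows "finite I \<Longrightarrow> I \<noteq> {} \<Longrightarrow> (\<forall>i\<in>I. continuous_on S (f i)) \<Longrightarrow>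
    continuous_on S (\<lambda>t. Max ((\<lambda>i. f i t) ` I))"
proof (induction I rule: finite_ne_induct)
  case (insert x F)
  then have "(\<lambda>t. Max ((\<lambda>i. f i t) ` insert x F)) = (\<lambda>t. max (f x t) (Max ((\<lambda>i. f i t) ` F)))"
    by (auto intro!: ext Max_insert)
  then show ?case using insert by (auto intro!: continuous_on_max)
qed simp

lemma continuous_on_Min_image:
  fixes f :: "'a \<Rightarrow> real \<Rightarrow> real"
  shows "finite I \<Longrightarrow> I \<noteq> {} \<Longrightarrow> (\<forall>i\<in>I. continuous_on S (f i)) \<Longrightarrow>
    continuous_on S (\<lambda>t. Min ((\<lambda>i. f i t) ` I))"
proof (induction I rule: finite_ne_induct)
  case (insert x F)
  then have "(\<lambda>t. Min ((\<lambda>i. f i t) ` insert x F)) = (\<lambda>t. min (f x t) (Min ((\<lambda>i. f i t) ` F)))"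
    by (auto intro!: ext Min_insert)
  then show ?case using insert by (auto intro!: continuous_on_min)
qed simp

text \<open>Below the critical temperature the scaffolds are strictly apart, above it they have crossed;
  by continuity they agree at it, except at \<open>-1\<close> where the previous lemma is needed.\<close>
lemma scaffolds_meet_at_critical_temp:
  assumes G: "one_sided_numeric G" "\<not> is_number G"
    and cont: "continuous_on {-1..} (left_scaffold G)" "continuous_on {-1..} (right_scaffold G)"
  shows "left_scaffold G (critical_temp G) = right_scaffold G (critical_temp G)"
proof -
  define ts where "ts = critical_temp G"
  have ts: "-1 \<le> ts" using critical_temp_ge[OF G(2)] ts_def by simp
  have "left_scaffold G ts \<le> right_scaffold G ts"
  proof (rule ccontr)
    assume "\<not> left_scaffold G ts \<le> right_scaffold G ts"
    then obtain d where d: "d > 0" "\<forall>y\<in>{-1..}. \<bar>y - ts\<bar> < d \<longrightarrow> left_scaffold G y - right_scaffold G y > 0"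
      using continuous_on_pos_nbhd[OF continuous_on_diff[OF cont], of ts] ts by auto
    have "ts + d \<le> Inf (scaffold_crossings G)"
    proof (rule cInf_greatest[OF scaffold_crossings_nonempty[OF G(2)]])
      fix s assume s: "s \<in> scaffold_crossings G"
      then have "ts \<le> s" using critical_temp_le ts_def by simp
      moreover have "\<not> \<bar>s - ts\<bar> < d" using s d(2) by (auto simp: scaffold_crossings_def)
      ultimately show "ts + d \<le> s" by auto
    qed
    then show False using d(1) ts_def critical_temp_eq_Inf by simp
  qed
  moreover have "right_scaffold G ts \<le> left_scaffold G ts"
  proof (cases "ts = -1")
    case True
    then show ?thesis using right_scaffold_le_left_scaffold_at_minus_one[OF G] by simp
  next
    case False
    show ?thesis
    proof (rule ccontr)
      assume "\<not> right_scaffold G ts \<le> left_scaffold G ts"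
      then obtain d where d: "d > 0" "\<forall>y\<in>{-1..}. \<bar>y - ts\<bar> < d \<longrightarrow> right_scaffold G y - left_scaffold G y > 0"
        using continuous_on_pos_nbhd[OF continuous_on_diff[OF cont(2,1)], of ts] ts by auto
      define y where "y = max (-1) (ts - d / 2)"
      have y: "-1 \<le> y" "y < ts" "left_scaffold G y < right_scaffold G y"
        using d ts False unfolding y_def by auto
      then have "ts \<le> y" using critical_temp_le ts_def by (auto simp: scaffold_crossings_def)
      then show False using y by simp
    qed
  qed
  ultimately show ?thesis unfolding ts_def by simp
qed

lemma walls_continuous_on:
  assumes "one_sided_numeric G"
  shows "continuous_on {-1..} (left_wall G) \<and> continuous_on {-1..} (right_wall G) \<and>
    (\<not> is_number G \<longrightarrow> left_scaffold G (critical_temp G) = right_scaffold G (critical_temp G))"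
  using assms
proof (induction G rule: measure_induct_rule[of size])
  case (less G)
  show ?case
  proof (cases "is_number G")
    case True
    then show ?thesis using walls_of_number[OF True] by (simp add: continuous_on_const)
  next
    case False
    have options: "left_opts G \<noteq> []" "right_opts G \<noteq> []"
      using one_sided_numeric_opts[OF less.prems False] by auto
    have "continuous_on {-1..} (left_wall h) \<and> continuous_on {-1..} (right_wall h)"
      if "h \<in> set (left_opts G) \<union> set (right_opts G)" for h
      using less size_left_opt size_right_opt one_sided_numeric_left_opt
        one_sided_numeric_right_opt that by blast
    then have cont: "continuous_on {-1..} (left_scaffold G)" "continuous_on {-1..} (right_scaffold G)"
      unfolding left_scaffold_eq right_scaffold_eq using options
      by (auto intro!: continuous_on_Max_image continuous_on_Min_image continuous_on_diff continuous_on_add)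
    define ts where "ts = critical_temp G"
    have meet: "left_scaffold G ts = right_scaffold G ts"
      using scaffolds_meet_at_critical_temp[OF less.prems False cont] ts_def by simp
    have "left_wall G = (\<lambda>t. left_scaffold G (min t ts))" "right_wall G = (\<lambda>t. right_scaffold G (min t ts))"
      using walls_of_non_number[OF False] meet ts_def by (auto intro!: ext simp: min_def)
    moreover have "continuous_on {-1..} (\<lambda>t::real. min t ts)" "(\<lambda>t. min t ts) ` {-1..} \<subseteq> {-1..}"
      using critical_temp_ge[OF False] ts_def by (auto intro!: continuous_intros)
    ultimately show ?thesis
      using continuous_on_compose2[OF cont(1)] continuous_on_compose2[OF cont(2)] meet ts_def by auto
  qed
qed

interpretation above_minus_one: scaffold_walls "{-1..}"
proof
  fix G and t :: real assume G: "one_sided_numeric G" "\<not> is_number G" "t \<in> {-1..}"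
  then show "left_wall G t = left_scaffold G (min t (critical_temp G)) \<and>
             right_wall G t = right_scaffold G (min t (critical_temp G))"
    using walls_continuous_on[OF G(1)] walls_of_non_number[OF G(2), of t] by (simp add: min_def)
qed auto

lemma temperature_ge_of_opts:
  assumes P: "P \<in> set (left_opts G)" "one_sided_numeric P" "x \<in> canonical_numbers" "game_ge P x"
    and Q: "Q \<in> set (right_opts G)" "one_sided_numeric Q" "y \<in> canonical_numbers" "game_ge y Q"
    and "dyadic_value y \<le> dyadic_value x"
  shows "(dyadic_value x - dyadic_value y) / 2 - 1 \<le> temperature G"
proof -
  have G: "\<not> is_number G"
  proof
    assume "is_number G"
    then obtain N where N: "N \<in> canonical_numbers" "game_ge G N" "game_ge N G"
      using is_number_canonical game_eq_def by blast
    have "\<not> game_ge P N" using N(3) P(1) by (subst (asm) game_ge_iff_opts) auto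
    then have "\<not> game_ge x N" using P(4) game_ge_trans by blast
    moreover have "\<not> game_ge N Q" using N(2) Q(1) by (subst (asm) game_ge_iff_opts) auto
    then have "\<not> game_ge N y" using Q(4) game_ge_trans by blast
    ultimately show False using game_ge_canonical_iff N(1) P(3) Q(3) assms(9) by auto
  qed
  have "(dyadic_value x - dyadic_value y) / 2 - 1 \<le> Inf (scaffold_crossings G)"
  proof (rule cInf_greatest[OF scaffold_crossings_nonempty[OF G]])
    fix t assume "t \<in> scaffold_crossings G"
    then have t: "t \<in> {-1..}" "left_scaffold G t \<le> right_scaffold G t" by (auto simp: scaffold_crossings_def)
    have "dyadic_value x - 1 \<le> right_wall P t"
      using above_minus_one.wall_lower_bounds[OF P(2,3) t(1)] P(4) by simp
    moreover have "left_wall Q t \<le> dyadic_value y + 1"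
      using above_minus_one.wall_upper_bounds[OF Q(2,3) t(1)] Q(4) by simp
    ultimately have "dyadic_value x - dyadic_value y \<le> 2 * t + 2"
      using right_wall_le_left_scaffold[OF P(1), of t] right_scaffold_le_left_wall[OF Q(1), of t] t(2)
      by linarith
    then show "(dyadic_value x - dyadic_value y) / 2 - 1 \<le> t" by (simp add: field_simps)
  qed
  then show ?thesis using G temperature_eq_critical_temp critical_temp_eq_Inf by simp
qed

section \<open>Snort\<close>

definition left_moves :: "nat set \<Rightarrow> (nat \<Rightarrow> nat \<Rightarrow> bool) \<Rightarrow> nat set \<Rightarrow> nat set \<Rightarrow> nat set" where
  "left_moves V E B R = {v \<in> V - B - R. \<forall>u\<in>R. \<not> E u v}"

definition right_moves :: "nat set \<Rightarrow> (nat \<Rightarrow> nat \<Rightarrow> bool) \<Rightarrow> nat set \<Rightarrow> nat set \<Rightarrow> nat set" where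
  "right_moves V E B R = {v \<in> V - B - R. \<forall>u\<in>B. \<not> E u v}"

lemma snort_pos_Suc:
  "snort_pos (Suc n) V E B R =
     Game (map (\<lambda>v. snort_pos n V E (insert v B) R) (sorted_list_of_set (left_moves V E B R)))
          (map (\<lambda>v. snort_pos n V E B (insert v R)) (sorted_list_of_set (right_moves V E B R)))"
  by (simp add: left_moves_def right_moves_def)

lemma left_opts_snort_pos:
  "finite V \<Longrightarrow> set (left_opts (snort_pos (Suc n) V E B R)) =
     (\<lambda>v. snort_pos n V E (insert v B) R) ` left_moves V E B R"
  by (simp add: left_moves_def)

lemma right_opts_snort_pos:
  "finite V \<Longrightarrow> set (right_opts (snort_pos (Suc n) V E B R)) =
     (\<lambda>v. snort_pos n V E B (insert v R)) ` right_moves V E B R"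
  by (simp add: right_moves_def)

lemma neg_game_snort_pos: "neg_game (snort_pos n V E B R) = snort_pos n V E R B"
proof (induction n arbitrary: B R)
  case (Suc n)
  have "V - B - R = V - R - B" by auto
  then show ?case by (simp add: Suc comp_def)
qed simp

lemma snort_pos_without_right_moves:
  assumes "finite V" "right_moves V E B R = {}"
  shows "game_eq (snort_pos n V E B R) (pos_int_game (min n (card (left_moves V E B R))))"
  using assms(2)
proof (induction n arbitrary: B)
  case (Suc n)
  show ?case
  proof (cases "left_moves V E B R = {}")
    case True
    then show ?thesis using Suc.prems by (simp only: snort_pos_Suc) (simp add: game_eq_refl)
  next
    case False
    define k where "k = card (left_moves V E B R)"
    have fin: "finite (left_moves V E B R)" using assms(1) by (simp add: left_moves_def)
    have k: "k \<ge> 1" using False fin k_def by (simp add: Suc_leI card_gt_0_iff)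
    define GL where "GL = map (\<lambda>v. snort_pos n V E (insert v B) R) (sorted_list_of_set (left_moves V E B R))"
    have "game_eq g (pos_int_game (min n (k - 1)))" if "g \<in> set GL" for g
    proof -
      obtain v where v: "v \<in> left_moves V E B R" "g = snort_pos n V E (insert v B) R"
        using \<open>g \<in> set GL\<close> fin unfolding GL_def by auto
      have "right_moves V E (insert v B) R = {}" using Suc.prems by (auto simp: right_moves_def)
      moreover have "left_moves V E (insert v B) R = left_moves V E B R - {v}" by (auto simp: left_moves_def)
      ultimately show ?thesis using Suc.IH[of "insert v B"] fin v k_def by simp
    qed
    moreover have "GL \<noteq> []" using False fin unfolding GL_def by simp
    moreover have "snort_pos (Suc n) V E B R = Game GL []"
      using Suc.prems unfolding GL_def by (simp only: snort_pos_Suc) simp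
    ultimately have "game_eq (snort_pos (Suc n) V E B R) (pos_int_game (Suc (min n (k - 1))))"
      using game_eq_pos_int_game_Suc by simp
    moreover have "min (Suc n) k = Suc (min n (k - 1))" using k by simp
    ultimately show ?thesis unfolding k_def by simp
  qed
qed (simp add: game_eq_refl)

lemma one_sided_numeric_snort_pos: "finite V \<Longrightarrow> one_sided_numeric (snort_pos n V E B R)"
proof (induction n arbitrary: B R)
  case 0
  then show ?case using zero_game_is_number by simp
next
  case (Suc n)
  have left_only: "is_number (snort_pos (Suc n) V E B R)" if "right_moves V E B R = {}" for B R
  proof -
    have "pos_int_game j = int_game (int j)" for j by (simp add: int_game_def)
    then show ?thesis
      using snort_pos_without_right_moves[OF Suc.prems that] number_value_canonical(1)[OF int_game_canonical]
      by metis
  qed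
  have "is_number (snort_pos (Suc n) V E B R)" if "left_moves V E B R = {}"
  proof -
    have "right_moves V E R B = {}" using that by (auto simp: left_moves_def right_moves_def)
    then have "is_number (neg_game (snort_pos (Suc n) V E B R))"
      unfolding neg_game_snort_pos by (rule left_only)
    then show ?thesis using is_number_neg_game by (metis neg_game_neg_game)
  qed
  moreover have "finite (left_moves V E B R)" "finite (right_moves V E B R)"
    using Suc.prems by (auto simp: left_moves_def right_moves_def)
  ultimately show ?case
    using left_only[of B R] Suc.IH Suc.prems unfolding snort_pos_Suc
    by (subst one_sided_numeric.simps) (auto simp del: snort_pos.simps)
qed

lemma snort_pos_without_moves:
  "left_moves V E B R = {} \<Longrightarrow> right_moves V E B R = {} \<Longrightarrow> snort_pos n V E B R = Game [] []"
  by (cases n) (simp_all only: snort_pos_Suc snort_pos.simps(1), simp_all)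

lemma left_opt_snort_pos:
  assumes "finite V" "v \<in> left_moves V E B R"
  shows "card (V - insert v B - R) < card (V - B - R)"
    and "snort_pos (card (V - insert v B - R)) V E (insert v B) R \<in>
           set (left_opts (snort_pos (card (V - B - R)) V E B R))"
proof -
  have v: "v \<in> V - B - R" using assms(2) by (simp add: left_moves_def)
  have "Suc (card ((V - B - R) - {v})) = card (V - B - R)"
    by (rule card_Suc_Diff1) (use v assms(1) in auto)
  moreover have "V - insert v B - R = (V - B - R) - {v}" by auto
  ultimately have card: "card (V - B - R) = Suc (card (V - insert v B - R))" by simp
  then show "card (V - insert v B - R) < card (V - B - R)" by simp
  show "snort_pos (card (V - insert v B - R)) V E (insert v B) R \<in>
          set (left_opts (snort_pos (card (V - B - R)) V E B R))"
    unfolding card using left_opts_snort_pos[OF assms(1)] assms(2) by simp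
qed

lemma right_opt_snort_pos:
  assumes "finite V" "xr \<in> set (right_opts (snort_pos (card (V - B - R)) V E B R))"
  obtains v where "v \<in> right_moves V E B R" "xr = snort_pos (card (V - B - insert v R)) V E B (insert v R)"
    "card (V - B - insert v R) < card (V - B - R)"
proof (cases "card (V - B - R)")
  case (Suc k)
  then obtain v where v: "v \<in> right_moves V E B R" "xr = snort_pos k V E B (insert v R)"
    using assms(2) right_opts_snort_pos[OF assms(1)] by auto
  have "v \<in> V - B - R" using v(1) by (simp add: right_moves_def)
  moreover have "V - B - insert v R = (V - B - R) - {v}" by auto
  ultimately have "card (V - B - insert v R) = k"
    using Suc assms(1) by (simp add: card_Diff_singleton)
  then show ?thesis using that v Suc by simp
qed (use assms(2) in simp)

section \<open>Snort on a star of stars\<close>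

text \<open>Left's guaranteed lead in spare moves: her own leaves, plus \<open>m\<close> leaves for every second free
  star (the players alternate in claiming them), less one unless both the free stars and the
  shared leaves come in even number.\<close>
definition potential :: "nat \<Rightarrow> nat \<Rightarrow> nat \<Rightarrow> nat \<Rightarrow> int" where
  "potential m own free pool = int own + int m * int (free div 2) + (if even free \<and> even pool then 0 else -1)"

lemma potential_claim_claim:
  assumes "odd m" "2 \<le> free"
  shows "potential m (own + m) (free - 2) (pool + (m - 1)) = potential m own free pool"
proof -
  obtain f where f: "free = f + 2" using assms(2) by (metis add.commute le_add_diff_inverse)
  have "even (pool + (m - 1)) = even pool" using assms(1) by (elim oddE) simp
  then show ?thesis unfolding potential_def f by (simp add: algebra_simps)
qed

lemma potential_claim_lower:
  assumes "1 \<le> free"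
  shows "int own + int m * int (free div 2) - 1 \<le> potential m (own + m) (free - 1) pool"
proof -
  have "free div 2 \<le> (free - 1) div 2 + 1" using assms by linarith
  then have "int m * int (free div 2) \<le> int m * (int ((free - 1) div 2) + 1)"
    by (intro mult_left_mono) auto
  then show ?thesis unfolding potential_def by (auto simp: algebra_simps)
qed

text \<open>Once Left has coloured the centre \<open>c\<close>, Right can never colour a hub. A star is free while
  untouched, Left's once she has coloured its hub, and shared once Right has coloured one of its
  leaves; the uncoloured leaves of shared stars form a pool open to both players.\<close>
locale rooted_stars =
  fixes V :: "nat set" and E :: "nat \<Rightarrow> nat \<Rightarrow> bool" and c :: nat and U W :: "nat set"
    and p :: "nat \<Rightarrow> nat" and m :: nat
  assumes finite_U: "finite U" and finite_W: "finite W"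
    and c_notin_U: "c \<notin> U" and c_notin_W: "c \<notin> W" and U_W_disjoint: "U \<inter> W = {}"
    and V_eq: "V = insert c (U \<union> W)" and parent_in_U: "\<And>w. w \<in> W \<Longrightarrow> p w \<in> U"
    and card_children: "\<And>i. i \<in> U \<Longrightarrow> card {w\<in>W. p w = i} = m"
    and E_eq: "E = (\<lambda>x y. (x = c \<and> y \<in> U) \<or> (y = c \<and> x \<in> U) \<or>
                           (y \<in> W \<and> x = p y) \<or> (x \<in> W \<and> y = p x))"
    and odd_m: "odd m" and m_ge_3: "m \<ge> 3"
begin

definition leaves :: "nat \<Rightarrow> nat set" where
  "leaves i = {w\<in>W. p w = i}"

definition free_hubs :: "nat set \<Rightarrow> nat set \<Rightarrow> nat set" where
  "free_hubs B R = {i\<in>U. i \<notin> B \<and> (\<forall>w\<in>leaves i. w \<notin> B \<and> w \<notin> R)}"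

definition own_leaves :: "nat set \<Rightarrow> nat set \<Rightarrow> nat set" where
  "own_leaves B R = {w\<in>W. p w \<in> B \<and> w \<notin> B \<and> w \<notin> R}"

definition pool_leaves :: "nat set \<Rightarrow> nat set \<Rightarrow> nat set" where
  "pool_leaves B R = {w\<in>W. p w \<notin> B \<and> (\<exists>w'\<in>leaves (p w). w' \<in> R) \<and> w \<notin> B \<and> w \<notin> R}"

definition invariant :: "nat set \<Rightarrow> nat set \<Rightarrow> bool" where
  "invariant B R \<longleftrightarrow> c \<in> B \<and> B \<subseteq> V \<and> R \<subseteq> V \<and> B \<inter> R = {} \<and> U \<inter> R = {} \<and>
     (\<forall>w\<in>W. p w \<in> B \<longrightarrow> w \<notin> R) \<and>
     (\<forall>i\<in>U. i \<notin> B \<longrightarrow> (\<forall>w\<in>leaves i. w \<notin> R) \<longrightarrow> (\<forall>w\<in>leaves i. w \<notin> B))"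

definition potential_at :: "nat set \<Rightarrow> nat set \<Rightarrow> int" where
  "potential_at B R =
     potential m (card (own_leaves B R)) (card (free_hubs B R)) (card (pool_leaves B R))"

lemma finite_V: "finite V"
  using V_eq finite_U finite_W by simp

lemma finite_sets:
  "finite (leaves i)" "finite (free_hubs B R)" "finite (own_leaves B R)" "finite (pool_leaves B R)"
  using finite_U finite_W by (auto simp: leaves_def free_hubs_def own_leaves_def pool_leaves_def)

lemma card_leaves: "i \<in> U \<Longrightarrow> card (leaves i) = m"
  using card_children leaves_def by simp

lemma adjacent_leaf: "y \<in> W \<Longrightarrow> E x y \<longleftrightarrow> x = p y"
  using E_eq c_notin_W U_W_disjoint parent_in_U by auto

lemma adjacent_hub: "y \<in> U \<Longrightarrow> E x y \<longleftrightarrow> x = c \<or> (x \<in> W \<and> y = p x)"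
  using E_eq c_notin_U U_W_disjoint by auto

lemma right_moves_eq:
  "invariant B R \<Longrightarrow> right_moves V E B R = {w\<in>W. p w \<notin> B \<and> w \<notin> B \<and> w \<notin> R}"
  unfolding right_moves_def invariant_def
  using adjacent_leaf adjacent_hub V_eq c_notin_U c_notin_W U_W_disjoint by auto

lemma right_move_cases:
  assumes "invariant B R" "v \<in> right_moves V E B R"
  shows "(v \<in> W \<and> p v \<in> free_hubs B R) \<or> v \<in> pool_leaves B R"
proof -
  have v: "v \<in> W" "p v \<notin> B" "v \<notin> B" "v \<notin> R" using right_moves_eq[OF assms(1)] assms(2) by auto
  show ?thesis
  proof (cases "\<exists>w'\<in>leaves (p v). w' \<in> R")
    case True then show ?thesis using v by (auto simp: pool_leaves_def)
  next
    case False
    then have "\<forall>w\<in>leaves (p v). w \<notin> B" using assms(1) v parent_in_U unfolding invariant_def by blast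
    then show ?thesis using False v parent_in_U by (auto simp: free_hubs_def)
  qed
qed

lemma free_hub_left_move: "invariant B R \<Longrightarrow> j \<in> free_hubs B R \<Longrightarrow> j \<in> left_moves V E B R"
  unfolding left_moves_def free_hubs_def invariant_def leaves_def using adjacent_hub V_eq by auto

lemma own_leaf_left_move: "invariant B R \<Longrightarrow> w \<in> own_leaves B R \<Longrightarrow> w \<in> left_moves V E B R"
  unfolding left_moves_def own_leaves_def invariant_def using adjacent_leaf V_eq by auto

lemma parent_not_red: "invariant B R \<Longrightarrow> w \<in> W \<Longrightarrow> p w \<notin> R"
  using parent_in_U unfolding invariant_def by blast

lemma pool_leaf_left_move: "invariant B R \<Longrightarrow> w \<in> pool_leaves B R \<Longrightarrow> w \<in> left_moves V E B R"
proof -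
  assume a: "invariant B R" "w \<in> pool_leaves B R"
  then have "p w \<notin> R" using parent_not_red by (auto simp: pool_leaves_def)
  then show ?thesis using a unfolding left_moves_def pool_leaves_def invariant_def using adjacent_leaf V_eq by auto
qed

lemma left_move_cases:
  assumes I: "invariant B R" and z: "z \<in> left_moves V E B R"
  shows "z \<in> free_hubs B R \<or> (z \<in> W \<and> p z \<in> free_hubs B R) \<or> z \<in> own_leaves B R \<or> z \<in> pool_leaves B R"
proof -
  have z: "z \<in> V" "z \<notin> B" "z \<notin> R" "\<forall>u\<in>R. \<not> E u z" using z by (auto simp: left_moves_def)
  have "z \<noteq> c" using z I by (auto simp: invariant_def)
  then consider "z \<in> U" | "z \<in> W" using z V_eq by auto
  then show ?thesis
  proof cases
    case 1
    then have no_red: "\<forall>w\<in>leaves z. w \<notin> R" using z(4) adjacent_hub[OF 1] by (auto simp: leaves_def)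
    then have "\<forall>w\<in>leaves z. w \<notin> B" using I 1 z(2) unfolding invariant_def by blast
    then show ?thesis using 1 z(2) no_red by (auto simp: free_hubs_def)
  next
    case 2
    have "\<forall>w\<in>leaves (p z). w \<notin> B" if "p z \<notin> B" "\<forall>w\<in>leaves (p z). w \<notin> R"
      using I parent_in_U[OF 2] that unfolding invariant_def by blast
    then show ?thesis using 2 z(2,3) parent_in_U[OF 2]
      by (auto simp: free_hubs_def own_leaves_def pool_leaves_def)
  qed
qed

lemma no_moves_if_exhausted:
  assumes "invariant B R" "free_hubs B R = {}" "own_leaves B R = {}" "pool_leaves B R = {}"
  shows "left_moves V E B R = {} \<and> right_moves V E B R = {}"
  using left_move_cases[OF assms(1)] right_move_cases[OF assms(1)] assms(2-4) by blast

lemma invariantI: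
  "c \<in> B \<Longrightarrow> B \<subseteq> V \<Longrightarrow> R \<subseteq> V \<Longrightarrow> B \<inter> R = {} \<Longrightarrow> U \<inter> R = {} \<Longrightarrow>
   (\<And>w. w \<in> W \<Longrightarrow> p w \<in> B \<Longrightarrow> w \<notin> R) \<Longrightarrow>
   (\<And>i w. i \<in> U \<Longrightarrow> i \<notin> B \<Longrightarrow> \<forall>w\<in>leaves i. w \<notin> R \<Longrightarrow> w \<in> leaves i \<Longrightarrow> w \<notin> B) \<Longrightarrow>
   invariant B R"
  unfolding invariant_def by blast

lemma invariantD:
  assumes "invariant B R"
  shows "c \<in> B" "B \<subseteq> V" "R \<subseteq> V" "B \<inter> R = {}" "U \<inter> R = {}"
    and "\<And>w. w \<in> W \<Longrightarrow> p w \<in> B \<Longrightarrow> w \<notin> R"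
    and "\<And>i w. i \<in> U \<Longrightarrow> i \<notin> B \<Longrightarrow> \<forall>w\<in>leaves i. w \<notin> R \<Longrightarrow> w \<in> leaves i \<Longrightarrow> w \<notin> B"
  using assms unfolding invariant_def by blast+

lemma subset_V: "W \<subseteq> V" "U \<subseteq> V" using V_eq by auto

lemma right_claims_free_hub:
  assumes I: "invariant B R" and v: "v \<in> W" "p v \<in> free_hubs B R"
  shows "invariant B (insert v R)"
    and "free_hubs B (insert v R) = free_hubs B R - {p v}"
    and "own_leaves B (insert v R) = own_leaves B R"
    and "card (pool_leaves B (insert v R)) = card (pool_leaves B R) + (m - 1)"
proof -
  have vl: "v \<in> leaves (p v)" using v by (auto simp: leaves_def)
  have pv: "p v \<in> U" "p v \<notin> B" "\<forall>w\<in>leaves (p v). w \<notin> B \<and> w \<notin> R" using v(2) by (auto simp: free_hubs_def)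
  show "invariant B (insert v R)"
  proof (rule invariantI)
    show "insert v R \<subseteq> V" using invariantD(3)[OF I] v subset_V by auto
    show "B \<inter> insert v R = {}" using invariantD(4)[OF I] pv(3) vl by auto
    show "U \<inter> insert v R = {}" using invariantD(5)[OF I] v U_W_disjoint by auto
    show "\<And>w. w \<in> W \<Longrightarrow> p w \<in> B \<Longrightarrow> w \<notin> insert v R" using invariantD(6)[OF I] pv(2) by auto
    show "\<And>i w. i \<in> U \<Longrightarrow> i \<notin> B \<Longrightarrow> \<forall>w\<in>leaves i. w \<notin> insert v R \<Longrightarrow> w \<in> leaves i \<Longrightarrow> w \<notin> B"
      using invariantD(7)[OF I] by blast
  qed (use invariantD[OF I] in auto)
  show "free_hubs B (insert v R) = free_hubs B R - {p v}" using vl pv unfolding free_hubs_def leaves_def by auto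
  show "own_leaves B (insert v R) = own_leaves B R" using pv unfolding own_leaves_def by auto
  have e: "pool_leaves B (insert v R) = pool_leaves B R \<union> (leaves (p v) - {v})"
    using pv vl v unfolding pool_leaves_def leaves_def by auto
  have d: "pool_leaves B R \<inter> (leaves (p v) - {v}) = {}" using pv unfolding pool_leaves_def leaves_def by auto
  have "card (leaves (p v) - {v}) = m - 1" using vl card_leaves[OF pv(1)] finite_sets by simp
  then show "card (pool_leaves B (insert v R)) = card (pool_leaves B R) + (m - 1)"
    unfolding e using d finite_sets by (simp add: card_Un_disjoint)
qed

lemma right_takes_pool_leaf:
  assumes I: "invariant B R" and v: "v \<in> pool_leaves B R"
  shows "invariant B (insert v R)"
    and "free_hubs B (insert v R) = free_hubs B R"
    and "own_leaves B (insert v R) = own_leaves B R"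
    and "pool_leaves B (insert v R) = pool_leaves B R - {v}"
proof -
  have v1: "v \<in> W" "p v \<notin> B" "v \<notin> B" "v \<notin> R" "\<exists>w'\<in>leaves (p v). w' \<in> R" using v by (auto simp: pool_leaves_def)
  show "invariant B (insert v R)"
  proof (rule invariantI)
    show "insert v R \<subseteq> V" using invariantD(3)[OF I] v1 subset_V by auto
    show "B \<inter> insert v R = {}" using invariantD(4)[OF I] v1 by auto
    show "U \<inter> insert v R = {}" using invariantD(5)[OF I] v1 U_W_disjoint by auto
    show "\<And>w. w \<in> W \<Longrightarrow> p w \<in> B \<Longrightarrow> w \<notin> insert v R" using invariantD(6)[OF I] v1 by auto
    show "\<And>i w. i \<in> U \<Longrightarrow> i \<notin> B \<Longrightarrow> \<forall>w\<in>leaves i. w \<notin> insert v R \<Longrightarrow> w \<in> leaves i \<Longrightarrow> w \<notin> B"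
      using invariantD(7)[OF I] by blast
  qed (use invariantD[OF I] in auto)
  show "free_hubs B (insert v R) = free_hubs B R" using v1 unfolding free_hubs_def leaves_def by auto
  show "own_leaves B (insert v R) = own_leaves B R" using v1 unfolding own_leaves_def by auto
  show "pool_leaves B (insert v R) = pool_leaves B R - {v}" using v1 unfolding pool_leaves_def leaves_def by auto
qed

lemma left_claims_free_hub:
  assumes I: "invariant B R" and j: "j \<in> free_hubs B R"
  shows "invariant (insert j B) R"
    and "free_hubs (insert j B) R = free_hubs B R - {j}"
    and "card (own_leaves (insert j B) R) = card (own_leaves B R) + m"
    and "pool_leaves (insert j B) R = pool_leaves B R"
proof -
  have j1: "j \<in> U" "j \<notin> B" "\<forall>w\<in>leaves j. w \<notin> B \<and> w \<notin> R" using j by (auto simp: free_hubs_def)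
  have jR: "j \<notin> R" using I j1 unfolding invariant_def by auto
  show "invariant (insert j B) R"
  proof (rule invariantI)
    show "insert j B \<subseteq> V" using invariantD(2)[OF I] j1 subset_V by auto
    show "insert j B \<inter> R = {}" using invariantD(4)[OF I] jR by auto
    show "w \<notin> R" if "w \<in> W" "p w \<in> insert j B" for w
    proof (cases "p w = j")
      case True then have "w \<in> leaves j" using that by (simp add: leaves_def)
      then show ?thesis using j1(3) by blast
    next
      case False then show ?thesis using invariantD(6)[OF I] that by blast
    qed
    show "w' \<notin> insert j B" if a: "i \<in> U" "i \<notin> insert j B" "\<forall>w\<in>leaves i. w \<notin> R" "w' \<in> leaves i" for i w'
    proof -
      have "w' \<in> W" using a(4) by (simp add: leaves_def)
      then have "w' \<noteq> j" using j1(1) U_W_disjoint by auto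
      moreover have "w' \<notin> B" using invariantD(7)[OF I] a by blast
      ultimately show ?thesis by simp
    qed
  qed (use invariantD[OF I] in auto)
  show "free_hubs (insert j B) R = free_hubs B R - {j}" using j1 U_W_disjoint unfolding free_hubs_def leaves_def by auto
  have e: "own_leaves (insert j B) R = own_leaves B R \<union> leaves j" using j1 U_W_disjoint unfolding own_leaves_def leaves_def by auto
  have d: "own_leaves B R \<inter> leaves j = {}" using j1 unfolding own_leaves_def leaves_def by auto
  show "card (own_leaves (insert j B) R) = card (own_leaves B R) + m"
    unfolding e using d finite_sets card_leaves[OF j1(1)] by (simp add: card_Un_disjoint)
  show "pool_leaves (insert j B) R = pool_leaves B R" using j1 U_W_disjoint unfolding pool_leaves_def leaves_def by auto
qed

lemma left_takes_own_leaf: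
  assumes I: "invariant B R" and w: "w \<in> own_leaves B R"
  shows "invariant (insert w B) R"
    and "free_hubs (insert w B) R = free_hubs B R"
    and "own_leaves (insert w B) R = own_leaves B R - {w}"
    and "pool_leaves (insert w B) R = pool_leaves B R"
proof -
  have w1: "w \<in> W" "p w \<in> B" "w \<notin> B" "w \<notin> R" using w by (auto simp: own_leaves_def)
  have wU: "w \<notin> U" using w1 U_W_disjoint by auto
  show "invariant (insert w B) R"
  proof (rule invariantI)
    show "insert w B \<subseteq> V" using invariantD(2)[OF I] w1 subset_V by auto
    show "insert w B \<inter> R = {}" using invariantD(4)[OF I] w1 by auto
    show "\<And>w'. w' \<in> W \<Longrightarrow> p w' \<in> insert w B \<Longrightarrow> w' \<notin> R"
      using invariantD(6)[OF I] parent_in_U wU by fastforce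
    show "w' \<notin> insert w B" if a: "i \<in> U" "i \<notin> insert w B" "\<forall>w\<in>leaves i. w \<notin> R" "w' \<in> leaves i" for i w'
    proof -
      have "w' \<notin> B" using invariantD(7)[OF I] a by blast
      moreover have "w' \<noteq> w"
      proof
        assume "w' = w"
        then have "p w = i" using a(4) by (simp add: leaves_def)
        then show False using w1(2) a(2) by blast
      qed
      ultimately show ?thesis by simp
    qed
  qed (use invariantD[OF I] in auto)
  show "free_hubs (insert w B) R = free_hubs B R" using w1 wU unfolding free_hubs_def leaves_def by auto
  show "own_leaves (insert w B) R = own_leaves B R - {w}" using w1 parent_in_U wU unfolding own_leaves_def by auto
  show "pool_leaves (insert w B) R = pool_leaves B R" using w1 parent_in_U wU unfolding pool_leaves_def by auto
qed

lemma left_takes_pool_leaf: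
  assumes I: "invariant B R" and w: "w \<in> pool_leaves B R"
  shows "invariant (insert w B) R"
    and "free_hubs (insert w B) R = free_hubs B R"
    and "own_leaves (insert w B) R = own_leaves B R"
    and "pool_leaves (insert w B) R = pool_leaves B R - {w}"
proof -
  have w1: "w \<in> W" "p w \<notin> B" "w \<notin> B" "w \<notin> R" "\<exists>w'\<in>leaves (p w). w' \<in> R" using w by (auto simp: pool_leaves_def)
  have wU: "w \<notin> U" using w1 U_W_disjoint by auto
  show "invariant (insert w B) R"
  proof (rule invariantI)
    show "insert w B \<subseteq> V" using invariantD(2)[OF I] w1 subset_V by auto
    show "insert w B \<inter> R = {}" using invariantD(4)[OF I] w1 by auto
    show "\<And>w'. w' \<in> W \<Longrightarrow> p w' \<in> insert w B \<Longrightarrow> w' \<notin> R"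
      using invariantD(6)[OF I] parent_in_U wU by fastforce
    show "w' \<notin> insert w B" if a: "i \<in> U" "i \<notin> insert w B" "\<forall>w\<in>leaves i. w \<notin> R" "w' \<in> leaves i" for i w'
    proof -
      have "w' \<notin> B" using invariantD(7)[OF I] a by blast
      moreover have "w' \<noteq> w"
      proof
        assume "w' = w"
        then have "p w = i" using a(4) by (simp add: leaves_def)
        then show False using w1(5) a(3) by blast
      qed
      ultimately show ?thesis by simp
    qed
  qed (use invariantD[OF I] in auto)
  show "free_hubs (insert w B) R = free_hubs B R" using w1 wU unfolding free_hubs_def leaves_def by auto
  show "own_leaves (insert w B) R = own_leaves B R" using w1 parent_in_U wU unfolding own_leaves_def by auto
  show "pool_leaves (insert w B) R = pool_leaves B R - {w}" using w1 parent_in_U wU unfolding pool_leaves_def by auto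
qed

lemma reply_to_claim:
  assumes I: "invariant B R" and v: "v \<in> W" "p v \<in> free_hubs B R"
  shows "\<exists>w\<in>left_moves V E B (insert v R).
           invariant (insert w B) (insert v R) \<and> potential_at B R \<le> potential_at (insert w B) (insert v R)"
proof -
  define own where "own = card (own_leaves B R)"
  define free where "free = card (free_hubs B R)"
  define pool where "pool = card (pool_leaves B R)"
  note claim = right_claims_free_hub[OF I v]
  have free: "card (free_hubs B (insert v R)) = free - 1"
    using claim(2) v(2) finite_sets by (simp add: free_def)
  have "1 \<le> free" using v(2) finite_sets free_def by (auto simp: Suc_le_eq card_gt_0_iff)
  then consider "2 \<le> free" | "free = 1" by linarith
  then show ?thesis
  proof cases
    case 1
    then have "0 < card (free_hubs B (insert v R))" using free by simp
    then obtain j where j: "j \<in> free_hubs B (insert v R)" by (auto simp: card_gt_0_iff)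
    note reply = left_claims_free_hub[OF claim(1) j]
    have "potential_at (insert j B) (insert v R) = potential m (own + m) (free - 2) (pool + (m - 1))"
      using reply(2-4) claim(3,4) j free finite_sets
      by (simp add: potential_at_def own_def pool_def card_Diff_singleton numeral_2_eq_2)
    also have "\<dots> = potential_at B R"
      using potential_claim_claim[OF odd_m 1] by (simp add: potential_at_def own_def free_def pool_def)
    finally show ?thesis using free_hub_left_move[OF claim(1) j] reply(1) by auto
  next
    case 2
    have "0 < card (pool_leaves B (insert v R))" using claim(4) m_ge_3 by simp
    then obtain w where w: "w \<in> pool_leaves B (insert v R)" by (auto simp: card_gt_0_iff)
    note reply = left_takes_pool_leaf[OF claim(1) w]
    have "potential_at (insert w B) (insert v R) = potential m own 0 (pool + (m - 1) - 1)"
      using reply(2-4) claim(3,4) w free 2 finite_sets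
      by (simp add: potential_at_def own_def pool_def card_Diff_singleton)
    then have "potential_at B R \<le> potential_at (insert w B) (insert v R)"
      using 2 m_ge_3 by (simp add: potential_at_def own_def free_def pool_def potential_def)
    then show ?thesis using pool_leaf_left_move[OF claim(1) w] reply(1) by auto
  qed
qed

lemma reply_to_pool_move:
  assumes I: "invariant B R" and v: "v \<in> pool_leaves B R"
  shows "(\<exists>w\<in>left_moves V E B (insert v R).
            invariant (insert w B) (insert v R) \<and> potential_at B R \<le> potential_at (insert w B) (insert v R)) \<or>
         (potential_at B R < 0 \<and> left_moves V E B (insert v R) = {} \<and> right_moves V E B (insert v R) = {})"
proof -
  define own where "own = card (own_leaves B R)"
  define free where "free = card (free_hubs B R)"
  define pool where "pool = card (pool_leaves B R)"
  note take = right_takes_pool_leaf[OF I v]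
  have pool: "card (pool_leaves B (insert v R)) = pool - 1"
    using take(4) v finite_sets by (simp add: pool_def)
  have "1 \<le> pool" using v finite_sets pool_def by (auto simp: Suc_le_eq card_gt_0_iff)
  then consider "2 \<le> pool" | "pool = 1" "1 \<le> free" | "pool = 1" "free = 0" "1 \<le> own"
    | "pool = 1" "free = 0" "own = 0" by linarith
  then show ?thesis
  proof cases
    case 1
    then have "0 < card (pool_leaves B (insert v R))" using pool by simp
    then obtain w where w: "w \<in> pool_leaves B (insert v R)" by (auto simp: card_gt_0_iff)
    note reply = left_takes_pool_leaf[OF take(1) w]
    have "potential_at (insert w B) (insert v R) = potential m own free (pool - 2)"
      using reply(2-4) take(2,3) w pool finite_sets
      by (simp add: potential_at_def own_def free_def card_Diff_singleton numeral_2_eq_2)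
    also have "\<dots> = potential_at B R"
      using 1 by (simp add: potential_at_def own_def free_def pool_def potential_def even_diff_nat)
    finally show ?thesis using pool_leaf_left_move[OF take(1) w] reply(1) by auto
  next
    case 2
    then have "0 < card (free_hubs B (insert v R))" using take(2) free_def by simp
    then obtain j where j: "j \<in> free_hubs B (insert v R)" by (auto simp: card_gt_0_iff)
    note reply = left_claims_free_hub[OF take(1) j]
    have "potential_at (insert j B) (insert v R) = potential m (own + m) (free - 1) 0"
      using reply(2-4) take(2,3) j pool 2 finite_sets
      by (simp add: potential_at_def own_def free_def card_Diff_singleton)
    moreover have "potential_at B R = int own + int m * int (free div 2) - 1"
      using 2 by (simp add: potential_at_def own_def free_def pool_def potential_def)
    ultimately have "potential_at B R \<le> potential_at (insert j B) (insert v R)"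
      using potential_claim_lower[OF 2(2), of own m 0] by linarith
    then show ?thesis using free_hub_left_move[OF take(1) j] reply(1) by blast
  next
    case 3
    then have "0 < card (own_leaves B (insert v R))" using take(3) own_def by simp
    then obtain w where w: "w \<in> own_leaves B (insert v R)" by (auto simp: card_gt_0_iff)
    note reply = left_takes_own_leaf[OF take(1) w]
    have "potential_at (insert w B) (insert v R) = potential_at B R"
      using reply(2-4) take(2,3) w pool 3 finite_sets
      by (simp add: potential_at_def own_def free_def pool_def potential_def card_Diff_singleton)
    then show ?thesis using own_leaf_left_move[OF take(1) w] reply(1) by auto
  next
    case 4
    then have "free_hubs B (insert v R) = {}" "own_leaves B (insert v R) = {}"
      "pool_leaves B (insert v R) = {}"
      using take(2,3) pool finite_sets free_def own_def by auto
    moreover have "potential_at B R < 0"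
      using 4 by (simp add: potential_at_def own_def free_def pool_def potential_def)
    ultimately show ?thesis using no_moves_if_exhausted[OF take(1)] by blast
  qed
qed

lemma left_move_loses_at_most_one:
  assumes I: "invariant B R" and pos: "0 < potential_at B R"
  shows "\<exists>w\<in>left_moves V E B R. invariant (insert w B) R \<and> potential_at B R - 1 \<le> potential_at (insert w B) R"
proof -
  define own where "own = card (own_leaves B R)"
  define free where "free = card (free_hubs B R)"
  define pool where "pool = card (pool_leaves B R)"
  consider "1 \<le> free" | "free = 0" "1 \<le> own" | "free = 0" "own = 0" "1 \<le> pool"
    | "free = 0" "own = 0" "pool = 0" by linarith
  then show ?thesis
  proof cases
    case 1
    then obtain j where j: "j \<in> free_hubs B R" using free_def by (auto simp: card_gt_0_iff Suc_le_eq)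
    note move = left_claims_free_hub[OF I j]
    have "potential_at (insert j B) R = potential m (own + m) (free - 1) pool"
      using move(2-4) j finite_sets by (simp add: potential_at_def own_def free_def pool_def card_Diff_singleton)
    moreover have "potential_at B R \<le> int own + int m * int (free div 2)"
      by (simp add: potential_at_def own_def free_def pool_def potential_def)
    ultimately have "potential_at B R - 1 \<le> potential_at (insert j B) R"
      using potential_claim_lower[OF 1, of own m pool] by linarith
    then show ?thesis using free_hub_left_move[OF I j] move(1) by blast
  next
    case 2
    then obtain w where w: "w \<in> own_leaves B R" using own_def by (auto simp: card_gt_0_iff Suc_le_eq)
    note move = left_takes_own_leaf[OF I w]
    have "potential_at (insert w B) R = potential_at B R - 1"
      using move(2-4) w 2 finite_sets
      by (simp add: potential_at_def own_def free_def pool_def potential_def card_Diff_singleton)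
    then show ?thesis using own_leaf_left_move[OF I w] move(1) by auto
  next
    case 3
    then obtain w where w: "w \<in> pool_leaves B R" using pool_def by (auto simp: card_gt_0_iff Suc_le_eq)
    note move = left_takes_pool_leaf[OF I w]
    have "potential_at (insert w B) R = potential m 0 0 (pool - 1)"
      using move(2-4) w 3 finite_sets by (simp add: potential_at_def own_def free_def pool_def card_Diff_singleton)
    moreover have "potential_at B R - 1 \<le> potential m 0 0 (pool - 1)"
      using 3 by (auto simp: potential_at_def own_def free_def pool_def potential_def)
    ultimately show ?thesis using pool_leaf_left_move[OF I w] move(1) by auto
  next
    case 4
    then show ?thesis using pos by (simp add: potential_at_def own_def free_def pool_def potential_def)
  qed
qed

end

context rooted_stars
begin

lemma snort_pos_ge_potential:
  assumes "invariant B R" "b \<le> potential_at B R"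
  shows "game_ge (snort_pos (card (V - B - R)) V E B R) (int_game b)"
  using assms
proof (induction "card (V - B - R)" arbitrary: B R b rule: less_induct)
  case less
  show ?case
  proof (rule game_ge_int_gameI)
    show "\<forall>xr\<in>set (right_opts (snort_pos (card (V - B - R)) V E B R)). \<not> game_ge (int_game b) xr"
    proof
      fix xr assume "xr \<in> set (right_opts (snort_pos (card (V - B - R)) V E B R))"
      then obtain v where v: "v \<in> right_moves V E B R"
        "xr = snort_pos (card (V - B - insert v R)) V E B (insert v R)" "card (V - B - insert v R) < card (V - B - R)"
        by (rule right_opt_snort_pos[OF finite_V])
      consider w where "w \<in> left_moves V E B (insert v R)" "invariant (insert w B) (insert v R)"
          "potential_at B R \<le> potential_at (insert w B) (insert v R)"
        | "potential_at B R < 0" "left_moves V E B (insert v R) = {}" "right_moves V E B (insert v R) = {}"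
        using right_move_cases[OF less.prems(1) v(1)] reply_to_claim[OF less.prems(1)]
          reply_to_pool_move[OF less.prems(1)] by blast
      then show "\<not> game_ge (int_game b) xr"
      proof cases
        case (1 w)
        note opt = left_opt_snort_pos[OF finite_V 1(1)]
        have "game_ge (snort_pos (card (V - insert w B - insert v R)) V E (insert w B) (insert v R)) (int_game b)"
          using less.hyps[OF _ 1(2)] opt(1) v(3) less.prems(2) 1(3) by simp
        then show ?thesis using not_game_ge_if_left_opt_ge[OF opt(2)] v(2) by simp
      next
        case 2
        then show ?thesis
          using v(2) snort_pos_without_moves not_int_game_ge_zero_game less.prems(2) by simp
      qed
    qed
  next
    assume "0 < b"
    then obtain w where w: "w \<in> left_moves V E B R" "invariant (insert w B) R"
      "potential_at B R - 1 \<le> potential_at (insert w B) R"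
      using left_move_loses_at_most_one less.prems by fastforce
    note opt = left_opt_snort_pos[OF finite_V w(1)]
    show "\<exists>gl\<in>set (left_opts (snort_pos (card (V - B - R)) V E B R)). game_ge gl (int_game (b - 1))"
      using less.hyps[OF opt(1) w(2), of "b - 1"] w(3) less.prems(2) opt(2) by auto
  qed
qed

lemma invariant_initial: "invariant {c} {}"
  unfolding invariant_def using V_eq c_notin_W parent_in_U c_notin_U by (auto simp: leaves_def)

lemma temperature_ge_potential:
  assumes "0 \<le> potential_at {c} {}"
  shows "potential_at {c} {} - 1 \<le> temperature (snort V E)"
proof -
  define a where "a = potential_at {c} {}"
  define P where "P = snort_pos (card (V - {c} - {})) V E {c} {}"
  have c: "c \<in> left_moves V E {} {}" using V_eq by (simp add: left_moves_def)
  have P_left: "P \<in> set (left_opts (snort V E))"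
    using left_opt_snort_pos(2)[OF finite_V c] unfolding P_def snort_def by simp
  have "neg_game (snort V E) = snort V E" by (simp add: snort_def neg_game_snort_pos)
  then have Q_right: "neg_game P \<in> set (right_opts (snort V E))"
    using P_left right_opts_neg_game[of "snort V E"] by (metis image_eqI list.set_map)
  have P_ge: "game_ge P (int_game a)"
    using snort_pos_ge_potential[OF invariant_initial] unfolding P_def a_def by simp
  have "neg_game (int_game a) = int_game (- a)" using neg_game_num_game[of 0 a] by simp
  then have Q_le: "game_ge (int_game (- a)) (neg_game P)"
    using P_ge game_ge_neg_game_iff by metis
  have osn: "one_sided_numeric P" "one_sided_numeric (neg_game P)"
    unfolding P_def neg_game_snort_pos by (simp_all add: one_sided_numeric_snort_pos finite_V)
  show ?thesis
    using temperature_ge_of_opts[OF P_left osn(1) int_game_canonical P_ge Q_right osn(2)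
        int_game_canonical Q_le] assms
    unfolding a_def by simp
qed

end

context rooted_stars
begin

lemma max_degree_le: "max_degree V E \<le> max (card U) (m + 1)"
proof -
  have "card {u \<in> V. E v u} \<le> max (card U) (m + 1)" if v: "v \<in> V" for v
  proof -
    consider "v = c" | "v \<in> U" | "v \<in> W" using v V_eq by auto
    then show ?thesis
    proof cases
      case 1
      have "{u \<in> V. E v u} \<subseteq> U" using 1 E_eq c_notin_U c_notin_W parent_in_U by auto
      then have "card {u \<in> V. E v u} \<le> card U" using finite_U by (simp add: card_mono)
      then show ?thesis by simp
    next
      case 2
      have "{u \<in> V. E v u} \<subseteq> insert c (leaves v)" using 2 E_eq c_notin_U U_W_disjoint by (auto simp: leaves_def)
      then have "card {u \<in> V. E v u} \<le> card (insert c (leaves v))" using finite_sets by (simp add: card_mono)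
      also have "\<dots> \<le> Suc (card (leaves v))" by (rule card_insert_le_m1) auto
      finally show ?thesis using card_leaves[OF 2] by simp
    next
      case 3
      have "{u \<in> V. E v u} \<subseteq> {p v}" using 3 E_eq c_notin_W U_W_disjoint parent_in_U by auto
      then have "card {u \<in> V. E v u} \<le> card {p v}" by (intro card_mono) auto
      then show ?thesis by simp
    qed
  qed
  moreover have "V \<noteq> {}" using V_eq by simp
  ultimately show ?thesis unfolding max_degree_def using finite_V by (simp add: Max_le_iff)
qed

lemma is_simple_graph: "simple_graph V E"
proof -
  have ir: "p v \<noteq> v" if "v \<in> W" for v
  proof
    assume "p v = v"
    then have "v \<in> U" using parent_in_U[OF that] by simp
    then show False using that U_W_disjoint by auto
  qed
  have a: "\<forall>u v. E u v \<longrightarrow> u \<in> V \<and> v \<in> V" unfolding E_eq V_eq using parent_in_U by auto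
  have b: "\<forall>u v. E u v \<longrightarrow> E v u" unfolding E_eq by auto
  have d: "\<forall>v. \<not> E v v" unfolding E_eq using c_notin_U ir by (auto dest: sym)
  show ?thesis unfolding simple_graph_def using finite_V a b d by blast
qed

end

text \<open>Leaf \<open>j\<close> of hub \<open>i\<close> is the number \<open>i + (d + 1) j\<close>, so its hub is its residue modulo \<open>d + 1\<close>.\<close>
definition star_leaves :: "nat \<Rightarrow> nat set" where
  "star_leaves d = (\<lambda>(i, j). i + (d + 1) * j) ` ({1..d} \<times> {1..d})"

definition stars_graph_vertices :: "nat \<Rightarrow> nat set" where
  "stars_graph_vertices d = insert 0 ({1..d} \<union> star_leaves d)"

definition stars_graph_edges :: "nat \<Rightarrow> nat \<Rightarrow> nat \<Rightarrow> bool" where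
  "stars_graph_edges d x y \<longleftrightarrow>
     (x = 0 \<and> y \<in> {1..d}) \<or> (y = 0 \<and> x \<in> {1..d}) \<or>
     (y \<in> star_leaves d \<and> x = y mod (d + 1)) \<or> (x \<in> star_leaves d \<and> y = x mod (d + 1))"

lemma mod_star_leaf: "i \<le> d \<Longrightarrow> (i + (d + 1) * j) mod (d + 1) = (i :: nat)"
  using mod_mult_self2[of i "d + 1" j] by simp

lemma star_leaves_ge:
  assumes "w \<in> star_leaves d"
  shows "d + 2 \<le> w"
proof -
  obtain i j where "w = i + (d + 1) * j" "1 \<le> i" "1 \<le> j" using assms unfolding star_leaves_def by auto
  moreover have "(d + 1) * 1 \<le> (d + 1) * j" using \<open>1 \<le> j\<close> by (rule mult_le_mono2)
  ultimately show ?thesis by simp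
qed

lemma star_leaves_of_hub:
  assumes "i \<in> {1..d}"
  shows "{w \<in> star_leaves d. w mod (d + 1) = i} = (\<lambda>j. i + (d + 1) * j) ` {1..d}"
proof
  show "{w \<in> star_leaves d. w mod (d + 1) = i} \<subseteq> (\<lambda>j. i + (d + 1) * j) ` {1..d}"
    unfolding star_leaves_def using mod_star_leaf by fastforce
  show "(\<lambda>j. i + (d + 1) * j) ` {1..d} \<subseteq> {w \<in> star_leaves d. w mod (d + 1) = i}"
    using assms mod_star_leaf[of i d] unfolding star_leaves_def by auto
qed

lemma rooted_stars_instance:
  assumes "odd d" "3 \<le> d"
  shows "rooted_stars (stars_graph_vertices d) (stars_graph_edges d) 0 {1..d} (star_leaves d)
           (\<lambda>w. w mod (d + 1)) d"
proof
  show "finite (star_leaves d)" by (simp add: star_leaves_def)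
  show "0 \<notin> star_leaves d" "{1..d} \<inter> star_leaves d = {}" using star_leaves_ge by fastforce+
  show "w mod (d + 1) \<in> {1..d}" if "w \<in> star_leaves d" for w
    using that mod_star_leaf unfolding star_leaves_def by fastforce
  show "card {w \<in> star_leaves d. w mod (d + 1) = i} = d" if "i \<in> {1..d}" for i
  proof -
    have "inj_on (\<lambda>j. i + (d + 1) * j) {1..d}"
      by (rule inj_onI) (simp only: add_left_cancel mult_cancel_left, simp)
    then show ?thesis unfolding star_leaves_of_hub[OF that] by (simp add: card_image)
  qed
  show "stars_graph_edges d = (\<lambda>x y. (x = 0 \<and> y \<in> {1..d}) \<or> (y = 0 \<and> x \<in> {1..d}) \<or>
      (y \<in> star_leaves d \<and> x = y mod (d + 1)) \<or> (x \<in> star_leaves d \<and> y = x mod (d + 1)))"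
    by (intro ext) (simp only: stars_graph_edges_def)
qed (simp_all add: assms stars_graph_vertices_def)

lemma stars_graph_temperature_minus_degree:
  assumes "odd d" "3 \<le> d"
  shows "simple_graph (stars_graph_vertices d) (stars_graph_edges d) \<and>
    real (d * (d div 2)) - real d - 3 \<le>
      temperature (snort (stars_graph_vertices d) (stars_graph_edges d)) -
      max_degree (stars_graph_vertices d) (stars_graph_edges d)"
proof -
  interpret S: rooted_stars "stars_graph_vertices d" "stars_graph_edges d" 0 "{1..d}" "star_leaves d"
    "\<lambda>w. w mod (d + 1)" d
    by (rule rooted_stars_instance[OF assms])
  have "S.free_hubs {0} {} = {1..d}"
    unfolding S.free_hubs_def S.leaves_def by (auto dest: star_leaves_ge)
  moreover have "S.own_leaves {0} {} = {}"
    unfolding S.own_leaves_def using S.parent_in_U by force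
  moreover have "S.pool_leaves {0} {} = {}"
    unfolding S.pool_leaves_def by simp
  ultimately have potential: "S.potential_at {0} {} = int (d * (d div 2)) - 1"
    using assms(1) unfolding S.potential_at_def by (simp add: potential_def)
  have "1 \<le> d * (d div 2)" using assms(2) by (simp add: Suc_le_eq)
  then have "real (d * (d div 2)) - 2 \<le> temperature (snort (stars_graph_vertices d) (stars_graph_edges d))"
    using S.temperature_ge_potential unfolding potential by simp
  moreover have "max_degree (stars_graph_vertices d) (stars_graph_edges d) \<le> d + 1"
    using S.max_degree_le by simp
  ultimately show ?thesis using S.is_simple_graph by simp
qed

theorem theorem10:
  shows "\<forall>M::real. \<exists>(V::nat set) E. simple_graph V E \<and>
           temperature (snort V E) - real (max_degree V E) > M"
proof
  fix M :: real
  define k where "k = nat \<lceil>M\<rceil> + 3"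
  have M: "M < k" unfolding k_def by linarith
  have k: "3 \<le> k" by (simp add: k_def)
  then have "6 * k \<le> 2 * (k * k)" using mult_le_mono1[OF k, of k] by simp
  moreover have "(2 * k + 1) * ((2 * k + 1) div 2) = 2 * (k * k) + k" by (simp add: algebra_simps)
  ultimately have "k + (2 * k + 1) + 3 < (2 * k + 1) * ((2 * k + 1) div 2)" using k by linarith
  then have "real (k + (2 * k + 1) + 3) < real ((2 * k + 1) * ((2 * k + 1) div 2))"
    by (simp only: of_nat_less_iff)
  then have "real k < real ((2 * k + 1) * ((2 * k + 1) div 2)) - real (2 * k + 1) - 3" by simp
  then show "\<exists>(V::nat set) E. simple_graph V E \<and> temperature (snort V E) - real (max_degree V E) > M"
    using M stars_graph_temperature_minus_degree[of "2 * k + 1"] k by fastforce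
qed

end
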